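(* In the Broadcast LOCAL Clique model there is a randomized algorithm that, given a directed graph $G=(V,E,w_G)$ with $n$ nodes and non-negative integer edge weights in $\{0,1,\dots,W\}$, a source node $s$, and a parameter $\epsilon>0$, computes for every node $v$ an estimate $\hat d(s,v)$ with $\mathrm{dist}_G(s,v)\le \hat d(s,v)\le(1+\epsilon)\,\mathrm{dist}_G(s,v)$, and for any integer parameter $1\le h\le n$ spends $R(n)=\tilde O(h\log W/\epsilon)$ rounds and $M(n)=\tilde O\big(n^2\log W/(\epsilon h)\big)$ total message size. The algorithm is correct with high probability.
   Context: Broadcast LOCAL Clique model: the communication network is a clique on the $n$ nodes; communication proceeds in synchronous rounds; every message sent by a node in a round is received by all other nodes, and messages may have arbitrary size (possibly $0$). The complexity of an algorithm is measured by the number of rounds $R(n)$ and the total size $M(n)$ of all messages broadcast over the course of the algorithm. The nodes of the input graph are the nodes of the network; each node initially knows whether it is the source and knows its incident edges and their weights; at the end each node $v$ knows its estimate. $\mathrm{dist}_G(s,v)$ is the minimum weight of a directed path from $s$ to $v$. "With high probability" means with probability at least $1-n^{-c}$ for an arbitrary fixed constant $c$. $\tilde O(\cdot)$ suppresses factors polylogarithmic in $n$. *)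

theory Defs
  imports "HOL-Probability.Probability"
begin

text \<open>A weighted directed graph on the nodes 0..n-1 is a partial weight function
  w u v (None = no edge u->v). Nodes >= n are ignored.\<close>

definition is_walk :: "nat \<Rightarrow> (nat \<Rightarrow> nat \<Rightarrow> nat option) \<Rightarrow> nat list \<Rightarrow> bool" where
  "is_walk n w ps \<longleftrightarrow> ps \<noteq> [] \<and> set ps \<subseteq> {..<n} \<and>
     (\<forall>i < length ps - 1. w (ps ! i) (ps ! Suc i) \<noteq> None)"

definition walk_weight :: "(nat \<Rightarrow> nat \<Rightarrow> nat option) \<Rightarrow> nat list \<Rightarrow> nat" where
  "walk_weight w ps = (\<Sum>i < length ps - 1. the (w (ps ! i) (ps ! Suc i)))"

definition graph_dist :: "nat \<Rightarrow> (nat \<Rightarrow> nat \<Rightarrow> nat option) \<Rightarrow> nat \<Rightarrow> nat \<Rightarrow> ereal" where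
  "graph_dist n w s v =
     (INF ps \<in> {ps. is_walk n w ps \<and> hd ps = s \<and> last ps = v}. ereal (real (walk_weight w ps)))"

text \<open>Global parameters known to all nodes: (n, W, epsilon, h).\<close>
type_synonym params = "nat \<times> nat \<times> real \<times> nat"

text \<open>Local input of a node: (is it the source?, weights of outgoing edges, weights of incoming edges).\<close>
type_synonym local_input = "bool \<times> (nat \<Rightarrow> nat option) \<times> (nat \<Rightarrow> nat option)"

text \<open>A history maps (round, sender) to the broadcast message (a bit string; [] = silent).\<close>
type_synonym history = "nat \<Rightarrow> nat \<Rightarrow> bool list"

text \<open>A randomized algorithm: a fixed number of rounds, a number of private fair coins per
  node, a message function (node id, local input, private coins, current round, history of
  all broadcasts of previous rounds) and an output function.\<close>
record bc_alg =
  num_rounds :: "params \<Rightarrow> nat"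
  num_coins  :: "params \<Rightarrow> nat"
  send       :: "params \<Rightarrow> nat \<Rightarrow> local_input \<Rightarrow> bool list \<Rightarrow> nat \<Rightarrow> history \<Rightarrow> bool list"
  out_fun    :: "params \<Rightarrow> nat \<Rightarrow> local_input \<Rightarrow> bool list \<Rightarrow> history \<Rightarrow> ereal"

definition node_input :: "nat \<Rightarrow> (nat \<Rightarrow> nat \<Rightarrow> nat option) \<Rightarrow> nat \<Rightarrow> nat \<Rightarrow> local_input" where
  "node_input n w s v = (v = s, \<lambda>u. if u < n then w v u else None, \<lambda>u. if u < n then w u v else None)"

fun run_hist :: "bc_alg \<Rightarrow> params \<Rightarrow> (nat \<Rightarrow> local_input) \<Rightarrow> (nat \<Rightarrow> bool list) \<Rightarrow> nat \<Rightarrow> history" where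
  "run_hist A P inp r 0 = (\<lambda>_ _. [])"
| "run_hist A P inp r (Suc t) =
     (\<lambda>t' u. if t' = t \<and> u < fst P then send A P u (inp u) (r u) t (run_hist A P inp r t)
             else run_hist A P inp r t t' u)"

definition final_hist :: "bc_alg \<Rightarrow> params \<Rightarrow> (nat \<Rightarrow> local_input) \<Rightarrow> (nat \<Rightarrow> bool list) \<Rightarrow> history" where
  "final_hist A P inp r = run_hist A P inp r (num_rounds A P)"

definition estimate :: "bc_alg \<Rightarrow> params \<Rightarrow> (nat \<Rightarrow> local_input) \<Rightarrow> (nat \<Rightarrow> bool list) \<Rightarrow> nat \<Rightarrow> ereal" where
  "estimate A P inp r v = out_fun A P v (inp v) (r v) (final_hist A P inp r)"

definition total_msg_size :: "bc_alg \<Rightarrow> params \<Rightarrow> (nat \<Rightarrow> local_input) \<Rightarrow> (nat \<Rightarrow> bool list) \<Rightarrow> nat" where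
  "total_msg_size A P inp r =
     (\<Sum>t < num_rounds A P. \<Sum>u < fst P. length (final_hist A P inp r t u))"

definition coin_space :: "nat \<Rightarrow> nat \<Rightarrow> (nat \<Rightarrow> bool list) set" where
  "coin_space n L = {r. (\<forall>v < n. length (r v) = L) \<and> (\<forall>v. n \<le> v \<longrightarrow> r v = [])}"

definition coins :: "nat \<Rightarrow> nat \<Rightarrow> (nat \<Rightarrow> bool list) pmf" where
  "coins n L = pmf_of_set (coin_space n L)"

end

theory Submission
  imports Defs
begin

text \<open>The algorithm samples a set X of about (n ln n)/h nodes together with the source; with high
  probability every shortest path from the source meets X within every h consecutive hops.
  For each scale j, edge weights are rounded up to multiples of a unit that is small compared
  with distances of order 2^j, and the rounded distances from every sampled node are propagated
  by a Bellman-Ford style broadcast that lasts O(h/\<epsilon>) rounds: in round t of the scale, a node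
  announces the sampled nodes at rounded distance exactly t, so that each node announces each
  sampled node at most once per scale. Taking the best scale for every pair, each node learns
  (1 + \<epsilon>/2)-approximations of the distances from X to itself, up to an additive 1/(2n) per hop;
  a shortest path from the source to v, cut at its sampled nodes into segments of at most h hops,
  shows that the resulting overlay distance approximates dist(s, v) well enough that its floor
  lies in [dist(s, v), (1 + \<epsilon>) dist(s, v)].\<close>

section \<open>Walks and distances\<close>

type_synonym weights = "nat \<Rightarrow> nat \<Rightarrow> nat option"

fun walk :: "nat \<Rightarrow> weights \<Rightarrow> nat list \<Rightarrow> bool" where
  "walk n w [] = False"
| "walk n w [x] = (x < n)"
| "walk n w (x # y # r) = (x < n \<and> w x y \<noteq> None \<and> walk n w (y # r))"

fun walk_cost :: "(nat \<Rightarrow> nat) \<Rightarrow> weights \<Rightarrow> nat list \<Rightarrow> nat" where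
  "walk_cost f w (x # y # r) = f (the (w x y)) + walk_cost f w (y # r)"
| "walk_cost f w _ = 0"

abbreviation walk_total :: "weights \<Rightarrow> nat list \<Rightarrow> nat" where
  "walk_total w \<equiv> walk_cost (\<lambda>a. a) w"

definition walk_between :: "nat \<Rightarrow> weights \<Rightarrow> nat \<Rightarrow> nat \<Rightarrow> nat list \<Rightarrow> bool" where
  "walk_between n w x u p \<longleftrightarrow> walk n w p \<and> hd p = x \<and> last p = u"

lemma is_walk_Cons_Cons:
  "is_walk n w (x # y # r) \<longleftrightarrow> x < n \<and> w x y \<noteq> None \<and> is_walk n w (y # r)"
proof -
  have "(\<forall>i < length (x # y # r) - 1. w ((x # y # r) ! i) ((x # y # r) ! Suc i) \<noteq> None)
     \<longleftrightarrow> w x y \<noteq> None \<and> (\<forall>i < length (y # r) - 1. w ((y # r) ! i) ((y # r) ! Suc i) \<noteq> None)"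
    by (auto simp: less_Suc_eq_0_disj)
  then show ?thesis unfolding is_walk_def by auto
qed

lemma is_walk_iff_walk: "is_walk n w p \<longleftrightarrow> walk n w p"
proof (induction n w p rule: walk.induct)
  case (3 n w x y r)
  then show ?case by (simp add: is_walk_Cons_Cons)
qed (simp_all add: is_walk_def)

lemma walk_weight_eq_walk_total: "walk_weight w p = walk_total w p"
proof (induction "(\<lambda>a::nat. a)" w p rule: walk_cost.induct)
  case (1 w x y r)
  have "walk_weight w (x # y # r) = the (w x y) + walk_weight w (y # r)"
    unfolding walk_weight_def by (simp add: sum.lessThan_Suc_shift del: sum.lessThan_Suc)
  then show ?case using 1 by simp
qed (simp_all add: walk_weight_def)

lemma walk_Cons_hd_less: "walk n w (x # l) \<Longrightarrow> x < n"
  by (cases l) auto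

lemma walk_set: "walk n w p \<Longrightarrow> set p \<subseteq> {..<n}"
  by (induction n w p rule: walk.induct) auto

lemma walk_append:
  assumes "p \<noteq> []" "q \<noteq> []" "last p = hd q"
  shows "(walk n w (p @ tl q) \<longleftrightarrow> walk n w p \<and> walk n w q)
    \<and> walk_cost f w (p @ tl q) = walk_cost f w p + walk_cost f w q"
  using assms
proof (induction p rule: induct_list012)
  case (2 x)
  then have "[x] @ tl q = q" by (cases q) auto
  then show ?case using 2 walk_Cons_hd_less by (cases q) auto
qed auto

lemma walk_split:
  assumes "walk n w p" "k < length p"
  shows "walk n w (take (Suc k) p) \<and> walk n w (drop k p) \<and>
         walk_cost f w p = walk_cost f w (take (Suc k) p) + walk_cost f w (drop k p)"
proof -
  have "p = take (Suc k) p @ tl (drop k p)" using assms(2)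
    by (metis append_take_drop_id drop_Suc tl_drop)
  moreover have "last (take (Suc k) p) = hd (drop k p)" using assms(2)
    by (simp add: hd_drop_conv_nth take_Suc_conv_app_nth)
  moreover have "take (Suc k) p \<noteq> []" "drop k p \<noteq> []" using assms(2) by auto
  ultimately show ?thesis using walk_append[of "take (Suc k) p" "drop k p" n w f] assms(1) by metis
qed

lemma walk_between_append:
  assumes "walk_between n w x y p" "walk_between n w y z q"
  shows "walk_between n w x z (p @ tl q) \<and> walk_cost f w (p @ tl q) = walk_cost f w p + walk_cost f w q"
proof -
  have ne: "p \<noteq> []" "q \<noteq> []" and l: "last p = hd q"
    using assms unfolding walk_between_def by auto
  have "hd (p @ tl q) = x" using assms ne unfolding walk_between_def by simp
  moreover have "last (p @ tl q) = z"
  proof (cases "tl q = []")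
    case True
    then have "q = [hd q]" using ne by (cases q) auto
    then show ?thesis using assms l True unfolding walk_between_def by (metis append.right_neutral last_ConsL True)
  next
    case False
    then show ?thesis using assms ne unfolding walk_between_def by (simp add: last_tl)
  qed
  ultimately show ?thesis using walk_append[OF ne l, of n w f] assms unfolding walk_between_def by auto
qed

lemma walk_between_drop:
  assumes "walk_between n w x v p" "i < length p"
  shows "walk_between n w (p ! i) v (drop i p)"
  using walk_split[of n w p i] assms
  unfolding walk_between_def by (simp add: hd_drop_conv_nth last_drop)

lemma walk_between_take:
  assumes "walk_between n w x v p" "k < length p"
  shows "walk_between n w x (p ! k) (take (Suc k) p)"
proof -
  have "walk n w (take (Suc k) p)" using walk_split[of n w p k] assms unfolding walk_between_def by blast
  moreover have "hd (take (Suc k) p) = x" using assms unfolding walk_between_def by (cases p) auto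
  moreover have "last (take (Suc k) p) = p ! k" using assms(2) by (simp add: take_Suc_conv_app_nth)
  ultimately show ?thesis unfolding walk_between_def by simp
qed

lemma distinct_walk_length_le: "walk n w p \<Longrightarrow> distinct p \<Longrightarrow> length p \<le> n"
  using walk_set distinct_card by (metis card_lessThan card_mono finite_lessThan)

lemma walk_total_le:
  assumes "walk n w p" "\<forall>u < n. \<forall>v < n. \<forall>x. w u v = Some x \<longrightarrow> x \<le> W"
  shows "walk_total w p \<le> (length p - 1) * W"
  using assms
proof (induction n w p rule: walk.induct)
  case (3 n w x y r)
  then have "y < n" by (cases r) auto
  then have "the (w x y) \<le> W" using 3 by auto
  then show ?case using 3 by (cases r) auto
qed auto

lemma graph_dist_eq_INF:
  "graph_dist n w x u = (INF p \<in> {p. walk_between n w x u p}. ereal (real (walk_total w p)))"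
  unfolding graph_dist_def walk_between_def is_walk_iff_walk walk_weight_eq_walk_total by simp

lemma graph_dist_le_walk:
  "walk_between n w x u p \<Longrightarrow> graph_dist n w x u \<le> ereal (real (walk_total w p))"
  unfolding graph_dist_eq_INF by (rule INF_lower) simp

lemma graph_dist_nonneg: "graph_dist n w x u \<ge> 0"
  unfolding graph_dist_eq_INF by (rule INF_greatest) simp

lemma graph_dist_attained:
  assumes "graph_dist n w x u \<noteq> \<infinity>"
  shows "\<exists>p. walk_between n w x u p \<and> graph_dist n w x u = ereal (real (walk_total w p))"
proof -
  have "\<exists>p. walk_between n w x u p"
  proof (rule ccontr)
    assume "\<nexists>p. walk_between n w x u p"
    then have empty: "{p. walk_between n w x u p} = {}" by auto
    show False using assms unfolding graph_dist_eq_INF empty by (simp add: top_ereal_def)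
  qed
  then obtain p0 where "walk_between n w x u p0" by blast
  then obtain p where p: "walk_between n w x u p"
    and min: "\<And>q. walk_between n w x u q \<Longrightarrow> walk_total w p \<le> walk_total w q"
    using ex_has_least_nat[of "walk_between n w x u" p0 "walk_total w"] by blast
  have "ereal (real (walk_total w p)) \<le> graph_dist n w x u"
    unfolding graph_dist_eq_INF by (rule INF_greatest) (simp add: min)
  then show ?thesis using graph_dist_le_walk[OF p] p by (intro exI[of _ p]) simp
qed

lemma graph_dist_triangle: "graph_dist n w x z \<le> graph_dist n w x y + graph_dist n w y z"
proof (cases "graph_dist n w x y = \<infinity> \<or> graph_dist n w y z = \<infinity>")
  case True
  then show ?thesis using graph_dist_nonneg[of n w x y] graph_dist_nonneg[of n w y z] by auto
next
  case False
  then obtain p q where p: "walk_between n w x y p" "graph_dist n w x y = ereal (real (walk_total w p))"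
    and q: "walk_between n w y z q" "graph_dist n w y z = ereal (real (walk_total w q))"
    using graph_dist_attained by meson
  note pq = walk_between_append[OF p(1) q(1), of "\<lambda>a. a"]
  have "graph_dist n w x z \<le> ereal (real (walk_total w (p @ tl q)))"
    using graph_dist_le_walk pq by blast
  also have "\<dots> = graph_dist n w x y + graph_dist n w y z" using pq p q by simp
  finally show ?thesis .
qed

text \<open>A cycle can be cut out of a walk without increasing its weight.\<close>
lemma graph_dist_attained_distinct:
  assumes "graph_dist n w x u \<noteq> \<infinity>"
  shows "\<exists>p. walk_between n w x u p \<and> distinct p \<and> graph_dist n w x u = ereal (real (walk_total w p))"
proof -
  let ?d = "graph_dist n w x u"
  let ?P = "\<lambda>p. walk_between n w x u p \<and> ?d = ereal (real (walk_total w p))"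
  obtain p where p: "?P p" and shortest: "\<And>q. ?P q \<Longrightarrow> length p \<le> length q"
    using graph_dist_attained[OF assms] ex_has_least_nat[where P="?P" and m=length] by blast
  have "distinct p"
  proof (rule ccontr)
    assume "\<not> distinct p"
    then obtain a z m c where pd: "p = a @ [z] @ m @ [z] @ c" using not_distinct_decomp by blast
    let ?A = "a @ [z]" and ?B = "z # m @ [z]" and ?C = "z # c"
    have p_eq: "p = ?A @ tl (?B @ tl ?C)" using pd by simp
    have BC: "(walk n w (?B @ tl ?C) \<longleftrightarrow> walk n w ?B \<and> walk n w ?C) \<and>
       walk_total w (?B @ tl ?C) = walk_total w ?B + walk_total w ?C"
      by (rule walk_append) auto
    have ABC: "(walk n w (?A @ tl (?B @ tl ?C)) \<longleftrightarrow> walk n w ?A \<and> walk n w (?B @ tl ?C)) \<and>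
       walk_total w (?A @ tl (?B @ tl ?C)) = walk_total w ?A + walk_total w (?B @ tl ?C)"
      by (rule walk_append) auto
    have AC: "(walk n w (?A @ tl ?C) \<longleftrightarrow> walk n w ?A \<and> walk n w ?C) \<and>
       walk_total w (?A @ tl ?C) = walk_total w ?A + walk_total w ?C"
      by (rule walk_append) auto
    let ?q = "?A @ tl ?C"
    have q: "walk_between n w x u ?q"
      using p p_eq ABC BC AC pd unfolding walk_between_def by (cases a; cases c) auto
    have "walk_total w ?q \<le> walk_total w p" using p_eq ABC BC AC by simp
    then have "?P ?q" using graph_dist_le_walk[OF q] p q by auto
    from shortest[OF this] show False using pd by simp
  qed
  then show ?thesis using p by blast
qed

fun nat_bits :: "nat \<Rightarrow> nat \<Rightarrow> bool list" where
  "nat_bits 0 x = []"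
| "nat_bits (Suc b) x = odd x # nat_bits b (x div 2)"

fun bits_nat :: "bool list \<Rightarrow> nat" where
  "bits_nat [] = 0"
| "bits_nat (a # as) = of_bool a + 2 * bits_nat as"

definition encode_ids :: "nat \<Rightarrow> nat list \<Rightarrow> bool list" where
  "encode_ids b xs = concat (map (nat_bits b) xs)"

definition decode_ids :: "nat \<Rightarrow> bool list \<Rightarrow> nat list" where
  "decode_ids b bs = map (\<lambda>k. bits_nat (take b (drop (k * b) bs))) [0..<length bs div b]"

lemma length_nat_bits [simp]: "length (nat_bits b x) = b"
  by (induction b arbitrary: x) auto

lemma bits_nat_nat_bits: "bits_nat (nat_bits b x) = x mod 2 ^ b"
proof (induction b arbitrary: x)
  case (Suc b)
  have "x mod 2 ^ Suc b = x mod 2 + 2 * (x div 2 mod 2 ^ b)"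
    by (simp add: mod_mult2_eq mult.commute)
  then show ?case using Suc by (simp add: odd_iff_mod_2_eq_one)
qed simp

lemma nat_bits_bits_nat: "nat_bits (length a) (bits_nat a) = a"
  by (induction a) auto

lemma length_encode_ids: "length (encode_ids b xs) = b * length xs"
  unfolding encode_ids_def by (induction xs) auto

lemma length_decode_ids: "length (decode_ids b bs) = length bs div b"
  unfolding decode_ids_def by simp

lemma decode_ids_Nil [simp]: "decode_ids b [] = []"
  unfolding decode_ids_def by simp

lemma decode_ids_append:
  assumes "length a = b" "b > 0"
  shows "decode_ids b (a @ rest) = bits_nat a # decode_ids b rest"
proof -
  have l: "length (a @ rest) div b = Suc (length rest div b)"
    using assms by (simp add: div_add_self1)
  have "[0..<Suc (length rest div b)] = 0 # map Suc [0..<length rest div b]"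
    by (simp add: map_Suc_upt upt_conv_Cons)
  then show ?thesis unfolding decode_ids_def l using assms
    by (simp add: drop_append add.commute)
qed

lemma decode_encode_ids: "b > 0 \<Longrightarrow> decode_ids b (encode_ids b xs) = map (\<lambda>x. x mod 2 ^ b) xs"
proof (induction xs)
  case (Cons x xs)
  have "encode_ids b (x # xs) = nat_bits b x @ encode_ids b xs" by (simp add: encode_ids_def)
  then show ?case using Cons decode_ids_append[of "nat_bits b x" b] by (simp add: bits_nat_nat_bits)
qed (simp add: encode_ids_def decode_ids_def)

lemma set_decode_encode_ids:
  assumes "b > 0" "finite S" "\<forall>x\<in>S. x < 2 ^ b"
  shows "set (decode_ids b (encode_ids b (sorted_list_of_set S))) = S"
  using assms by (simp add: decode_encode_ids)

text \<open>At least 1 even for weight 0, so that rounded costs strictly increase along every edge.\<close>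
definition rounded :: "real \<Rightarrow> nat \<Rightarrow> nat" where
  "rounded r a = nat \<lfloor>real a / r\<rfloor> + 1"

lemma rounded_ge_1: "rounded r a \<ge> 1"
  unfolding rounded_def by simp

lemma rounded_bounds:
  assumes "r > 0"
  shows "real a \<le> r * real (rounded r a)" "r * real (rounded r a) \<le> real a + r"
proof -
  have eq: "real (rounded r a) = real_of_int \<lfloor>real a / r\<rfloor> + 1"
    using assms by (simp add: rounded_def)
  have "real a / r \<le> real (rounded r a)" "real (rounded r a) \<le> real a / r + 1"
    unfolding eq by linarith+
  then show "real a \<le> r * real (rounded r a)" "r * real (rounded r a) \<le> real a + r"
    using assms by (simp_all add: field_simps)
qed

lemma walk_total_le_rounded:
  "r > 0 \<Longrightarrow> real (walk_total w p) \<le> r * real (walk_cost (rounded r) w p)"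
proof (induction p rule: induct_list012)
  case (3 x y z)
  then show ?case using rounded_bounds(1)[OF 3(3), of "the (w x y)"] by (simp add: distrib_left)
qed auto

lemma rounded_le_walk_total:
  "r > 0 \<Longrightarrow> r * real (walk_cost (rounded r) w p) \<le> real (walk_total w p) + r * real (length p - 1)"
proof (induction p rule: induct_list012)
  case (3 x y z)
  then show ?case using rounded_bounds(2)[OF 3(3), of "the (w x y)"] by (simp add: distrib_left)
qed auto

definition reach_cost :: "nat \<Rightarrow> weights \<Rightarrow> (nat \<Rightarrow> nat) \<Rightarrow> nat \<Rightarrow> nat \<Rightarrow> nat \<Rightarrow> bool" where
  "reach_cost n w f x u t \<longleftrightarrow> (\<exists>p. walk_between n w x u p \<and> walk_cost f w p = t)"

definition least_cost :: "nat \<Rightarrow> weights \<Rightarrow> (nat \<Rightarrow> nat) \<Rightarrow> nat \<Rightarrow> nat \<Rightarrow> nat \<Rightarrow> bool" where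
  "least_cost n w f x u t \<longleftrightarrow> reach_cost n w f x u t \<and> (\<forall>t'<t. \<not> reach_cost n w f x u t')"

definition relax_cost :: "nat \<Rightarrow> weights \<Rightarrow> (nat \<Rightarrow> nat) \<Rightarrow> nat \<Rightarrow> nat \<Rightarrow> nat \<Rightarrow> bool" where
  "relax_cost n w f x u t \<longleftrightarrow> (t = 0 \<and> x = u) \<or>
     (\<exists>y a ty. y < n \<and> w y u = Some a \<and> least_cost n w f x y ty \<and> t = ty + f a)"

lemma reach_cost_refl: "u < n \<Longrightarrow> reach_cost n w f u u 0"
  unfolding reach_cost_def walk_between_def by (intro exI[of _ "[u]"]) simp

lemma reach_cost_step:
  assumes "reach_cost n w f x y t" "u < n" "w y u = Some a"
  shows "reach_cost n w f x u (t + f a)"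
proof -
  obtain p where p: "walk_between n w x y p" "walk_cost f w p = t"
    using assms(1) unfolding reach_cost_def by blast
  then have "y < n" unfolding walk_between_def using walk_set[of n w p] by (cases p rule: rev_cases) auto
  then have "walk_between n w y u [y, u]" using assms unfolding walk_between_def by simp
  from walk_between_append[OF p(1) this, of f] show ?thesis
    unfolding reach_cost_def using p(2) assms(3) by auto
qed

lemma reach_cost_cases:
  assumes "reach_cost n w f x u t"
  shows "(t = 0 \<and> x = u) \<or> (\<exists>y a ty. y < n \<and> w y u = Some a \<and> reach_cost n w f x y ty \<and> t = ty + f a)"
proof -
  obtain p where p: "walk_between n w x u p" "walk_cost f w p = t"
    using assms unfolding reach_cost_def by blast
  show ?thesis
  proof (cases "length p \<le> 1")
    case True
    then have "p = [u]" using p unfolding walk_between_def by (cases p) auto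
    then show ?thesis using p unfolding walk_between_def by simp
  next
    case False
    define k where "k = length p - 2"
    have k: "k < length p" "Suc (Suc k) = length p" using False unfolding k_def by auto
    have split: "walk n w (drop k p)" "walk_cost f w p = walk_cost f w (take (Suc k) p) + walk_cost f w (drop k p)"
      using walk_split[OF _ k(1)] p unfolding walk_between_def by blast+
    have "p ! Suc k = u" using p k unfolding walk_between_def
      by (metis last_conv_nth list.size(3) Zero_not_Suc diff_Suc_1)
    then have last2: "drop k p = [p ! k, u]" using k
      by (metis Cons_nth_drop_Suc drop_all le_refl lessI)
    obtain a where a: "w (p ! k) u = Some a" using split(1) last2 by auto
    have "reach_cost n w f x (p ! k) (walk_cost f w (take (Suc k) p))"
      unfolding reach_cost_def using walk_between_take[OF p(1) k(1)] by blast
    moreover have "p ! k < n" using split(1) last2 by simp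
    ultimately show ?thesis using a split(2) last2 p(2) by auto
  qed
qed

lemma least_cost_exists:
  assumes "reach_cost n w f x u t"
  shows "\<exists>t0\<le>t. least_cost n w f x u t0"
proof -
  define t0 where "t0 = (LEAST t. reach_cost n w f x u t)"
  have "reach_cost n w f x u t0" "t0 \<le> t"
    unfolding t0_def using assms by (rule LeastI, rule Least_le)
  moreover have "\<forall>t'<t0. \<not> reach_cost n w f x u t'"
    unfolding t0_def using not_less_Least by blast
  ultimately show ?thesis unfolding least_cost_def by blast
qed

lemma least_cost_unique: "least_cost n w f x u t \<Longrightarrow> least_cost n w f x u t' \<Longrightarrow> t = t'"
  unfolding least_cost_def by (meson linorder_neqE_nat)

lemma relax_cost_reach_cost:
  "u < n \<Longrightarrow> relax_cost n w f x u t \<Longrightarrow> reach_cost n w f x u t"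
  unfolding relax_cost_def least_cost_def using reach_cost_refl reach_cost_step by blast

lemma reach_cost_relax_cost:
  assumes "reach_cost n w f x u t"
  shows "\<exists>t'\<le>t. relax_cost n w f x u t'"
  using reach_cost_cases[OF assms]
proof
  assume "\<exists>y a ty. y < n \<and> w y u = Some a \<and> reach_cost n w f x y ty \<and> t = ty + f a"
  then obtain y a ty where y: "y < n" "w y u = Some a" "reach_cost n w f x y ty" "t = ty + f a"
    by blast
  obtain t0 where "t0 \<le> ty" "least_cost n w f x y t0" using least_cost_exists[OF y(3)] by blast
  then show ?thesis using y unfolding relax_cost_def by (intro exI[of _ "t0 + f a"]) auto
qed (auto simp: relax_cost_def)

lemma least_cost_iff_first_relax:
  assumes "u < n"
  shows "relax_cost n w f x u t \<and> (\<forall>t'<t. \<not> relax_cost n w f x u t') \<longleftrightarrow> least_cost n w f x u t"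
proof
  assume first: "relax_cost n w f x u t \<and> (\<forall>t'<t. \<not> relax_cost n w f x u t')"
  have "\<not> reach_cost n w f x u t'" if "t' < t" for t'
    using reach_cost_relax_cost[of n w f x u t'] first that by force
  then show "least_cost n w f x u t"
    using first relax_cost_reach_cost[OF assms] unfolding least_cost_def by blast
next
  assume least: "least_cost n w f x u t"
  then obtain t'' where t'': "t'' \<le> t" "relax_cost n w f x u t''"
    using reach_cost_relax_cost unfolding least_cost_def by blast
  then have "t'' = t"
    using least relax_cost_reach_cost[OF assms] unfolding least_cost_def by (meson le_neq_implies_less)
  then show "relax_cost n w f x u t \<and> (\<forall>t'<t. \<not> relax_cost n w f x u t')"
    using t'' least relax_cost_reach_cost[OF assms] unfolding least_cost_def by blast
qed

section \<open>The algorithm\<close>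

definition bit_length :: "nat \<Rightarrow> nat" where
  "bit_length m = (LEAST b. m < 2 ^ b)"

text \<open>Number of rounds per scale, minus one.\<close>
definition hop_budget :: "nat \<Rightarrow> real \<Rightarrow> nat" where
  "hop_budget h e = nat \<lceil>4 * real h / min e 1\<rceil> + h"

definition num_samples :: "real \<Rightarrow> nat \<Rightarrow> nat \<Rightarrow> nat" where
  "num_samples c n h = nat \<lceil>2 * (c + 2) * real n * ln (real n) / real h\<rceil>"

text \<open>The rounding unit of scale j; scale 0 handles distance 0, scale j \<ge> 1 distances in
  [2^(j-1), 2^j).\<close>
definition scale_unit :: "nat \<Rightarrow> nat \<Rightarrow> real \<Rightarrow> nat \<Rightarrow> real" where
  "scale_unit n h e j = (if j = 0 then 1 / (2 * real n) else min e 1 * 2 ^ (j - 1) / (2 * real h))"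

definition param_width :: "params \<Rightarrow> nat" where
  "param_width P = bit_length (fst P)"

definition param_top :: "params \<Rightarrow> nat" where
  "param_top = (\<lambda>(n, W, e, h). bit_length (n * W))"

definition param_budget :: "params \<Rightarrow> nat" where
  "param_budget = (\<lambda>(n, W, e, h). hop_budget h e)"

definition param_unit :: "params \<Rightarrow> nat \<Rightarrow> real" where
  "param_unit = (\<lambda>(n, W, e, h). scale_unit n h e)"

text \<open>Round 0 identifies the source, round 1 the sample; then scales 0 .. param_top P follow,
  each lasting param_budget P + 1 rounds.\<close>
definition rounds :: "params \<Rightarrow> nat" where
  "rounds P = 2 + (param_top P + 1) * (param_budget P + 1)"

definition phase_round :: "nat \<Rightarrow> nat \<Rightarrow> nat \<Rightarrow> nat" where
  "phase_round D j t = 2 + j * (D + 1) + t"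

definition announced_source :: "nat \<Rightarrow> history \<Rightarrow> nat" where
  "announced_source n H = (LEAST u. u < n \<and> H 0 u \<noteq> [])"

text \<open>The coins of node 0, broadcast in round 1, are read as a list of identifiers; those below
  n, together with the source, form the sample.\<close>
definition history_sample :: "nat \<Rightarrow> nat \<Rightarrow> history \<Rightarrow> nat set" where
  "history_sample n b H = insert (announced_source n H) {x \<in> set (decode_ids b (H 1 0)). x < n}"

definition relaxes :: "params \<Rightarrow> nat \<Rightarrow> local_input \<Rightarrow> nat \<Rightarrow> history \<Rightarrow> nat \<Rightarrow> nat \<Rightarrow> bool" where
  "relaxes P u inp j H x t \<longleftrightarrow> (t = 0 \<and> x = u) \<or>
     (\<exists>y a ty. snd (snd inp) y = Some a \<and> ty < t \<and> ty + rounded (param_unit P j) a = t \<and>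
        x \<in> set (decode_ids (param_width P) (H (phase_round (param_budget P) j ty) y)))"

definition phase_message :: "params \<Rightarrow> nat \<Rightarrow> local_input \<Rightarrow> nat \<Rightarrow> nat \<Rightarrow> history \<Rightarrow> bool list" where
  "phase_message P u inp j t H = encode_ids (param_width P) (sorted_list_of_set
     {x \<in> history_sample (fst P) (param_width P) H. relaxes P u inp j H x t \<and> (\<forall>t'<t. \<not> relaxes P u inp j H x t')})"

definition sssp_send :: "params \<Rightarrow> nat \<Rightarrow> local_input \<Rightarrow> bool list \<Rightarrow> nat \<Rightarrow> history \<Rightarrow> bool list" where
  "sssp_send P u inp r t H = (if t = 0 then (if fst inp then [True] else [])
     else if t = 1 then (if u = 0 then r else [])
     else phase_message P u inp ((t - 2) div (param_budget P + 1)) ((t - 2) mod (param_budget P + 1)) H)"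

definition scale_estimate :: "params \<Rightarrow> history \<Rightarrow> nat \<Rightarrow> nat \<Rightarrow> ereal" where
  "scale_estimate P H x u = (INF (j, t) \<in> {(j, t). j \<le> param_top P \<and> t \<le> param_budget P \<and>
        x \<in> set (decode_ids (param_width P) (H (phase_round (param_budget P) j t) u))}.
      ereal (param_unit P j * real t))"

fun chain_cost :: "(nat \<Rightarrow> nat \<Rightarrow> ereal) \<Rightarrow> nat list \<Rightarrow> ereal" where
  "chain_cost E (x # y # r) = E x y + chain_cost E (y # r)"
| "chain_cost E _ = 0"

definition chain_dist :: "(nat \<Rightarrow> nat \<Rightarrow> ereal) \<Rightarrow> nat \<Rightarrow> nat \<Rightarrow> ereal" where
  "chain_dist E x v = (INF q \<in> {q. q \<noteq> [] \<and> hd q = x \<and> last q = v}. chain_cost E q)"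

definition floor_ereal :: "ereal \<Rightarrow> ereal" where
  "floor_ereal E = (if E = \<infinity> then \<infinity> else ereal (real_of_int \<lfloor>real_of_ereal E\<rfloor>))"

text \<open>Every node knows the whole history, so it can evaluate the overlay distance locally.\<close>
definition sssp_out :: "params \<Rightarrow> nat \<Rightarrow> local_input \<Rightarrow> bool list \<Rightarrow> history \<Rightarrow> ereal" where
  "sssp_out P v inp r H = floor_ereal (chain_dist (scale_estimate P H) (announced_source (fst P) H) v)"

definition sssp_alg :: "real \<Rightarrow> bc_alg" where
  "sssp_alg c = \<lparr>num_rounds = rounds, num_coins = (\<lambda>(n, W, e, h). num_samples c n h * bit_length n),
     send = sssp_send, out_fun = sssp_out\<rparr>"

lemma less_two_pow_bit_length: "m < 2 ^ bit_length m"
  unfolding bit_length_def by (rule LeastI[of _ m]) simp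

lemma bit_length_pos: "m \<ge> 1 \<Longrightarrow> bit_length m > 0"
  using less_two_pow_bit_length[of m] by (cases "bit_length m") auto

lemma two_pow_bit_length_le: "m \<ge> 1 \<Longrightarrow> 2 ^ bit_length m \<le> 2 * m"
proof -
  assume "m \<ge> 1"
  then have b: "bit_length m - 1 < bit_length m" using bit_length_pos by simp
  have "\<not> m < 2 ^ (bit_length m - 1)"
    using not_less_Least[OF b[unfolded bit_length_def]] unfolding bit_length_def .
  moreover have "(2::nat) ^ bit_length m = 2 * 2 ^ (bit_length m - 1)"
    using b by (metis less_nat_zero_code power_eq_if)
  ultimately show ?thesis by simp
qed

lemma phase_round_div_mod:
  assumes "t \<le> D"
  shows "(phase_round D j t - 2) div (D + 1) = j" "(phase_round D j t - 2) mod (D + 1) = t"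
proof -
  have "phase_round D j t - 2 = t + (D + 1) * j" unfolding phase_round_def by simp
  then show "(phase_round D j t - 2) div (D + 1) = j" "(phase_round D j t - 2) mod (D + 1) = t"
    using assms by (simp_all only: div_mult_self2 mod_mult_self2) simp_all
qed

lemma phase_round_cases:
  assumes "t \<ge> 2"
  shows "t = phase_round D ((t - 2) div (D + 1)) ((t - 2) mod (D + 1))" "(t - 2) mod (D + 1) \<le> D"
proof -
  have "t - 2 = (t - 2) div (D + 1) * (D + 1) + (t - 2) mod (D + 1)"
    by (simp only: div_mult_mod_eq)
  then show "t = phase_round D ((t - 2) div (D + 1)) ((t - 2) mod (D + 1))"
    unfolding phase_round_def using assms by simp
  show "(t - 2) mod (D + 1) \<le> D" using mod_less_divisor[of "D + 1" "t - 2"] by simp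
qed

locale sssp_instance =
  fixes c :: real and n W :: nat and e :: real and h :: nat and w :: weights and s :: nat
  assumes s_less_n: "s < n" and e_pos: "e > 0" and h_ge_1: "1 \<le> h"
begin

abbreviation "P \<equiv> (n, W, e, h)"
abbreviation "inp \<equiv> node_input n w s"
abbreviation "width \<equiv> bit_length n"
abbreviation "max_scale \<equiv> bit_length (n * W)"
abbreviation "budget \<equiv> hop_budget h e"
abbreviation "unit \<equiv> scale_unit n h e"
abbreviation "e' \<equiv> min e 1"

lemma param_simps [simp]:
  "param_width P = width" "param_top P = max_scale" "param_budget P = budget" "param_unit P = unit"
  unfolding param_width_def param_top_def param_budget_def param_unit_def by simp_all

lemma n_ge_1: "n \<ge> 1"
  using s_less_n by simp

lemma width_pos: "width > 0"
  using bit_length_pos n_ge_1 by simp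

lemma e'_bounds: "0 < e'" "e' \<le> 1" "e' \<le> e"
  using e_pos by auto

lemma unit_pos: "unit j > 0"
  unfolding scale_unit_def using n_ge_1 h_ge_1 e_pos by auto

lemma phase_round_less_rounds:
  assumes "t \<le> budget"
  shows "phase_round budget j t < rounds P \<longleftrightarrow> j \<le> max_scale"
proof -
  have "phase_round budget j t < rounds P \<longleftrightarrow> j * (budget + 1) + t < (max_scale + 1) * (budget + 1)"
    unfolding phase_round_def rounds_def by simp
  also have "\<dots> \<longleftrightarrow> j < max_scale + 1"
  proof
    assume "j * (budget + 1) + t < (max_scale + 1) * (budget + 1)"
    then show "j < max_scale + 1" by (metis add_lessD1 mult_less_cancel2)
  next
    assume "j < max_scale + 1"
    then have "j * (budget + 1) + (budget + 1) \<le> (max_scale + 1) * (budget + 1)"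
      by (metis Suc_eq_plus1 Suc_leI mult_Suc mult_le_mono1 add.commute)
    then show "j * (budget + 1) + t < (max_scale + 1) * (budget + 1)" using assms by linarith
  qed
  finally show ?thesis by (simp add: less_Suc_eq_le)
qed

definition sample :: "(nat \<Rightarrow> bool list) \<Rightarrow> nat set" where
  "sample r = insert s {x \<in> set (decode_ids width (r 0)). x < n}"

lemma sample_subset: "sample r \<subseteq> {..<n}"
  unfolding sample_def using s_less_n by auto

lemma finite_sample: "finite (sample r)"
  using sample_subset finite_subset by blast

text \<open>The message of node u in round t on coins r, computed from the graph instead of the history.\<close>
definition ideal_message :: "(nat \<Rightarrow> bool list) \<Rightarrow> nat \<Rightarrow> nat \<Rightarrow> bool list" where
  "ideal_message r t u = (if t = 0 then (if u = s then [True] else [])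
     else if t = 1 then (if u = 0 then r 0 else [])
     else encode_ids width (sorted_list_of_set {x \<in> sample r.
        least_cost n w (rounded (unit ((t - 2) div (budget + 1)))) x u ((t - 2) mod (budget + 1))}))"

definition ideal_history :: "(nat \<Rightarrow> bool list) \<Rightarrow> history" where
  "ideal_history r t u = (if u < n \<and> t < rounds P then ideal_message r t u else [])"

lemma ideal_history_phase:
  assumes "j \<le> max_scale" "t \<le> budget"
  shows "ideal_history r (phase_round budget j t) u = (if u < n then encode_ids width
    (sorted_list_of_set {x \<in> sample r. least_cost n w (rounded (unit j)) x u t}) else [])"
  using assms phase_round_less_rounds[OF assms(2)] phase_round_div_mod[OF assms(2)]
  unfolding ideal_history_def ideal_message_def by (simp add: phase_round_def)

lemma mem_ideal_phase:
  assumes "j \<le> max_scale" "t \<le> budget"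
  shows "x \<in> set (decode_ids width (ideal_history r (phase_round budget j t) u)) \<longleftrightarrow>
     u < n \<and> x \<in> sample r \<and> least_cost n w (rounded (unit j)) x u t"
proof -
  have "\<forall>y\<in>{x \<in> sample r. least_cost n w (rounded (unit j)) x u t}. y < 2 ^ width"
    using sample_subset less_two_pow_bit_length[of n] by fastforce
  then show ?thesis unfolding ideal_history_phase[OF assms]
    using set_decode_encode_ids[OF width_pos] finite_sample by auto
qed

lemma announced_source_ideal:
  assumes "\<forall>y. H 0 y = ideal_history r 0 y"
  shows "announced_source n H = s"
proof -
  have "(y < n \<and> H 0 y \<noteq> []) \<longleftrightarrow> y = s" for y
    using assms s_less_n unfolding ideal_history_def ideal_message_def rounds_def by auto
  then show ?thesis unfolding announced_source_def by (auto intro: Least_equality)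
qed

lemma history_sample_ideal:
  assumes "\<forall>t<2. \<forall>y. H t y = ideal_history r t y"
  shows "history_sample n width H = sample r"
proof -
  have "H 1 0 = r 0" using assms n_ge_1 unfolding ideal_history_def ideal_message_def rounds_def by auto
  moreover have "announced_source n H = s" using assms by (intro announced_source_ideal[of H r]) simp
  ultimately show ?thesis unfolding history_sample_def sample_def by simp
qed

text \<open>Since rounded weights are at least 1, the relaxations available in round t of a scale
  only involve announcements of earlier rounds of the same scale.\<close>
lemma relaxes_iff_relax_cost:
  assumes ideal: "\<forall>t'<phase_round budget j tt. \<forall>y. H t' y = ideal_history r t' y"
    and j: "j \<le> max_scale" and tt: "tt \<le> budget" and u: "u < n" and x: "x \<in> sample r" and t: "t \<le> tt"
  shows "relaxes P u (inp u) j H x t \<longleftrightarrow> relax_cost n w (rounded (unit j)) x u t"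
proof -
  let ?f = "rounded (unit j)"
  have earlier: "x \<in> set (decode_ids width (H (phase_round budget j ty) y)) \<longleftrightarrow> y < n \<and> least_cost n w ?f x y ty"
    if "ty < t" for ty y
  proof -
    have "H (phase_round budget j ty) y = ideal_history r (phase_round budget j ty) y"
      using ideal that t unfolding phase_round_def by simp
    then show ?thesis using mem_ideal_phase[OF j, of ty x r y] that t tt x by simp
  qed
  have "relaxes P u (inp u) j H x t \<longleftrightarrow> (t = 0 \<and> x = u) \<or>
     (\<exists>y a ty. y < n \<and> w y u = Some a \<and> ty < t \<and> ty + ?f a = t \<and>
        x \<in> set (decode_ids width (H (phase_round budget j ty) y)))"
    unfolding relaxes_def node_input_def by auto
  also have "\<dots> \<longleftrightarrow> (t = 0 \<and> x = u) \<or>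
     (\<exists>y a ty. y < n \<and> w y u = Some a \<and> ty < t \<and> ty + ?f a = t \<and> least_cost n w ?f x y ty)"
    using earlier by blast
  also have "\<dots> \<longleftrightarrow> relax_cost n w ?f x u t"
  proof -
    have "(y < n \<and> w y u = Some a \<and> ty < t \<and> ty + ?f a = t \<and> least_cost n w ?f x y ty) \<longleftrightarrow>
        (y < n \<and> w y u = Some a \<and> least_cost n w ?f x y ty \<and> t = ty + ?f a)" for y a ty
      using rounded_ge_1[of "unit j" a] by auto
    then show ?thesis by (simp only: relax_cost_def)
  qed
  finally show ?thesis .
qed

lemma sssp_send_ideal:
  assumes k: "k < rounds P" and u: "u < n" and ideal: "\<forall>t<k. \<forall>y. H t y = ideal_history r t y"
  shows "sssp_send P u (inp u) (r u) k H = ideal_message r k u"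
proof -
  consider "k = 0" | "k = 1" | "k \<ge> 2" by linarith
  then show ?thesis
  proof cases
    case 3
    define j where "j = (k - 2) div (budget + 1)"
    define tt where "tt = (k - 2) mod (budget + 1)"
    have k_eq: "k = phase_round budget j tt" and tt: "tt \<le> budget"
      unfolding j_def tt_def using phase_round_cases[OF 3] by simp_all
    have j: "j \<le> max_scale" using k phase_round_less_rounds[OF tt] k_eq by simp
    have "history_sample n width H = sample r"
      using history_sample_ideal ideal 3 by simp
    moreover have "relaxes P u (inp u) j H x t' \<longleftrightarrow> relax_cost n w (rounded (unit j)) x u t'"
      if "x \<in> sample r" "t' \<le> tt" for x t'
      using relaxes_iff_relax_cost[OF _ j tt u that] ideal k_eq by simp
    ultimately have "{x \<in> history_sample n width H. relaxes P u (inp u) j H x tt \<and> (\<forall>t'<tt. \<not> relaxes P u (inp u) j H x t')}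
        = {x \<in> sample r. relax_cost n w (rounded (unit j)) x u tt \<and> (\<forall>t'<tt. \<not> relax_cost n w (rounded (unit j)) x u t')}"
      by auto
    also have "\<dots> = {x \<in> sample r. least_cost n w (rounded (unit j)) x u tt}"
      using least_cost_iff_first_relax[OF u] by simp
    finally show ?thesis
      unfolding sssp_send_def ideal_message_def phase_message_def using 3
      by (simp add: j_def tt_def)
  qed (simp_all add: sssp_send_def ideal_message_def node_input_def)
qed

lemma run_hist_ideal:
  "k \<le> rounds P \<Longrightarrow> run_hist (sssp_alg c) P inp r k t u = (if t < k then ideal_history r t u else [])"
proof (induction k arbitrary: t u)
  case (Suc k)
  have ideal: "\<forall>t'<k. \<forall>y. run_hist (sssp_alg c) P inp r k t' y = ideal_history r t' y"
    using Suc by auto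
  show ?case
  proof (cases "t = k \<and> u < n")
    case True
    then show ?thesis using sssp_send_ideal[OF _ _ ideal] Suc.prems
      unfolding ideal_history_def by (simp add: sssp_alg_def)
  next
    case False
    then show ?thesis using Suc unfolding ideal_history_def by auto
  qed
qed simp

lemma final_hist_ideal: "final_hist (sssp_alg c) P inp r = ideal_history r"
  using run_hist_ideal[of "rounds P"] unfolding final_hist_def ideal_history_def
  by (auto simp: sssp_alg_def fun_eq_iff)

end

section \<open>Approximation guarantee\<close>

text \<open>Rounding down removes the additive error z < 1/2 when e d < 1, since d is an integer.\<close>
lemma floor_ereal_approx:
  fixes d :: nat and E :: ereal and e z :: real
  assumes "ereal (real d) \<le> E" "E \<le> ereal ((1 + e / 2) * real d + z)" "0 \<le> z" "z < 1 / 2" "0 \<le> e"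
  shows "ereal (real d) \<le> floor_ereal E \<and> floor_ereal E \<le> ereal (1 + e) * ereal (real d)"
proof -
  obtain x where x: "E = ereal x" using assms(1,2) by (cases E) auto
  have dx: "real d \<le> x" "x \<le> real d + e * real d / 2 + z" using assms x by (auto simp: algebra_simps)
  have "int d \<le> \<lfloor>x\<rfloor>" using dx(1) by (simp add: le_floor_iff)
  then have lo: "real d \<le> real_of_int \<lfloor>x\<rfloor>" by linarith
  have hi: "real_of_int \<lfloor>x\<rfloor> \<le> (1 + e) * real d"
  proof (cases "e * real d \<ge> 1")
    case True
    have "real_of_int \<lfloor>x\<rfloor> \<le> real d + e * real d / 2 + z" using dx(2) by linarith
    also have "\<dots> \<le> (1 + e) * real d" using True assms(4) by (simp add: algebra_simps)
    finally show ?thesis .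
  next
    case False
    have "x < real d + 1" using dx(2) False assms(4) by simp
    then have "\<lfloor>x\<rfloor> \<le> int d" by (simp add: floor_le_iff)
    then have "real_of_int \<lfloor>x\<rfloor> \<le> real d" by linarith
    also have "\<dots> \<le> (1 + e) * real d" using assms(5) by (simp add: algebra_simps)
    finally show ?thesis .
  qed
  show ?thesis using lo hi unfolding floor_ereal_def x by simp
qed

context sssp_instance
begin

lemma budget_ge: "4 * real h / e' + real h \<le> real budget"
proof -
  have "4 * real h / e' \<ge> 0" using e'_bounds by simp
  then show ?thesis unfolding hop_budget_def by linarith
qed

lemma graph_dist_le_scale_estimate: "graph_dist n w x u \<le> scale_estimate P (ideal_history r) x u"
  unfolding scale_estimate_def
proof (rule INF_greatest, clarify)
  fix j t
  assume "j \<le> param_top P" "t \<le> param_budget P"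
    "x \<in> set (decode_ids (param_width P) (ideal_history r (phase_round (param_budget P) j t) u))"
  then obtain q where q: "walk_between n w x u q" "walk_cost (rounded (unit j)) w q = t"
    using mem_ideal_phase unfolding least_cost_def reach_cost_def by auto
  have "graph_dist n w x u \<le> ereal (real (walk_total w q))" using graph_dist_le_walk[OF q(1)] .
  also have "\<dots> \<le> ereal (unit j * real t)" using walk_total_le_rounded[OF unit_pos, of w q j] q(2) by simp
  finally show "graph_dist n w x u \<le> ereal (param_unit P j * real t)" by simp
qed

lemma scale_estimate_le:
  assumes "j \<le> max_scale" "t \<le> budget" "x \<in> sample r" "u < n" "reach_cost n w (rounded (unit j)) x u t"
  shows "scale_estimate P (ideal_history r) x u \<le> ereal (unit j * real t)"
proof -
  obtain t0 where t0: "t0 \<le> t" "least_cost n w (rounded (unit j)) x u t0"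
    using least_cost_exists[OF assms(5)] by blast
  then have "scale_estimate P (ideal_history r) x u \<le> ereal (unit j * real t0)"
    using mem_ideal_phase[of j t0 x r u] assms unfolding scale_estimate_def
    by (intro INF_lower2[of "(j, t0)"]) auto
  also have "\<dots> \<le> ereal (unit j * real t)" using t0(1) unit_pos[of j] by (simp add: mult_left_mono)
  finally show ?thesis .
qed

lemma good_scale_exists:
  assumes "d < 2 ^ max_scale"
  obtains j where "j \<le> max_scale" "real d \<le> 4 * real h / e' * unit j"
    "\<And>k. k \<le> h \<Longrightarrow> unit j * real k \<le> e' * real d / 2 + real k / (2 * real n)"
proof (cases "d = 0")
  case True
  show ?thesis
  proof (rule that[of 0])
    show "real d \<le> 4 * real h / e' * unit 0" using True unit_pos[of 0] e'_bounds by simp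
    show "unit 0 * real k \<le> e' * real d / 2 + real k / (2 * real n)" for k
      using True by (simp add: scale_unit_def)
  qed simp
next
  case False
  define j where "j = (LEAST j. d < 2 ^ j)"
  have d_less: "d < 2 ^ j" unfolding j_def using assms by (rule LeastI)
  have "j \<le> max_scale" unfolding j_def using assms by (rule Least_le)
  have "j \<noteq> 0" using d_less False by (cases j) auto
  have "\<not> d < 2 ^ (j - 1)" unfolding j_def by (rule not_less_Least) (use \<open>j \<noteq> 0\<close> j_def in simp)
  then have le_d: "2 ^ (j - 1) \<le> real d" by (metis not_less of_nat_le_iff of_nat_numeral of_nat_power)
  have unit_j: "unit j = e' * 2 ^ (j - 1) / (2 * real h)"
    unfolding scale_unit_def using \<open>j \<noteq> 0\<close> by simp
  have "real d < 2 * 2 ^ (j - 1)"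
    using d_less \<open>j \<noteq> 0\<close> by (metis of_nat_less_iff of_nat_numeral of_nat_power power_eq_if)
  also have "2 * 2 ^ (j - 1) = 4 * real h / e' * unit j"
    unfolding unit_j using e'_bounds h_ge_1 by (simp add: field_simps)
  finally have "real d \<le> 4 * real h / e' * unit j" by simp
  moreover have "unit j * real k \<le> e' * real d / 2 + real k / (2 * real n)" if "k \<le> h" for k
  proof -
    have "unit j * real k \<le> unit j * real h" using that unit_pos[of j] by (simp add: mult_left_mono)
    also have "\<dots> = e' * 2 ^ (j - 1) / 2" unfolding unit_j using h_ge_1 by (simp add: field_simps)
    also have "\<dots> \<le> e' * real d / 2" using le_d e'_bounds by (simp add: mult_left_mono)
    finally have "unit j * real k \<le> e' * real d / 2" .
    moreover have "0 \<le> real k / (2 * real n)" by simp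
    ultimately show ?thesis by linarith
  qed
  ultimately show ?thesis using that \<open>j \<le> max_scale\<close> by blast
qed

lemma walk_total_less_two_pow_max_scale:
  assumes "walk n w q" "distinct q" "\<forall>u<n. \<forall>v<n. \<forall>x. w u v = Some x \<longrightarrow> x \<le> W"
  shows "walk_total w q < 2 ^ max_scale"
proof -
  have "walk_total w q \<le> (length q - 1) * W" using walk_total_le[OF assms(1,3)] .
  also have "\<dots> \<le> n * W" using distinct_walk_length_le[OF assms(1,2)] by (intro mult_right_mono) auto
  also have "\<dots> < 2 ^ max_scale" by (rule less_two_pow_bit_length)
  finally show ?thesis .
qed

lemma scale_estimate_le_segment:
  assumes q: "walk_between n w x u q" "distinct q" and x: "x \<in> sample r" and hops: "length q - 1 \<le> h"
    and weights: "\<forall>u<n. \<forall>v<n. \<forall>x. w u v = Some x \<longrightarrow> x \<le> W"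
  shows "scale_estimate P (ideal_history r) x u \<le>
     ereal ((1 + e' / 2) * real (walk_total w q) + real (length q - 1) / (2 * real n))"
proof -
  define d where "d = walk_total w q"
  define k where "k = length q - 1"
  have "d < 2 ^ max_scale"
    unfolding d_def using walk_total_less_two_pow_max_scale q weights unfolding walk_between_def by blast
  then obtain j where j: "j \<le> max_scale" "real d \<le> 4 * real h / e' * unit j"
    and additive: "unit j * real k \<le> e' * real d / 2 + real k / (2 * real n)"
    using good_scale_exists hops unfolding k_def by metis
  define t where "t = walk_cost (rounded (unit j)) w q"
  have up: "unit j * real t \<le> real d + unit j * real k"
    using rounded_le_walk_total[OF unit_pos] unfolding t_def d_def k_def .
  have "unit j * real k \<le> unit j * real h" using hops unit_pos[of j] unfolding k_def by simp
  moreover have "unit j * (4 * real h / e' + real h) = 4 * real h / e' * unit j + unit j * real h"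
    by (simp add: algebra_simps)
  ultimately have "unit j * real t \<le> unit j * (4 * real h / e' + real h)" using up j(2) by linarith
  then have "t \<le> budget" using budget_ge unit_pos[of j] by (simp add: mult_le_cancel_left_pos)
  moreover have "u < n" using q walk_set[of n w q] unfolding walk_between_def by (cases q rule: rev_cases) auto
  moreover have "reach_cost n w (rounded (unit j)) x u t" unfolding reach_cost_def t_def using q by blast
  ultimately have "scale_estimate P (ideal_history r) x u \<le> ereal (unit j * real t)"
    using scale_estimate_le j(1) x by blast
  also have "\<dots> \<le> ereal ((1 + e' / 2) * real d + real k / (2 * real n))"
    using up additive by (simp add: algebra_simps)
  finally show ?thesis unfolding d_def k_def .
qed

lemma graph_dist_le_chain_cost:
  "q \<noteq> [] \<Longrightarrow> last q < n \<Longrightarrow> graph_dist n w (hd q) (last q) \<le> chain_cost (scale_estimate P (ideal_history r)) q"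
proof (induction q rule: induct_list012)
  case (2 x)
  have "walk_between n w x x [x]" using 2 unfolding walk_between_def by simp
  from graph_dist_le_walk[OF this] show ?case by (simp add: zero_ereal_def)
next
  case (3 x y z)
  have "graph_dist n w x (last (y # z)) \<le> graph_dist n w x y + graph_dist n w y (last (y # z))"
    by (rule graph_dist_triangle)
  also have "\<dots> \<le> scale_estimate P (ideal_history r) x y + chain_cost (scale_estimate P (ideal_history r)) (y # z)"
    using 3 graph_dist_le_scale_estimate by (intro add_mono) auto
  finally show ?case by simp
qed simp

lemma graph_dist_le_chain_dist:
  "v < n \<Longrightarrow> graph_dist n w s v \<le> chain_dist (scale_estimate P (ideal_history r)) s v"
  unfolding chain_dist_def using graph_dist_le_chain_cost by (intro INF_greatest) auto

definition sample_hits :: "(nat \<Rightarrow> bool list) \<Rightarrow> nat list \<Rightarrow> bool" where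
  "sample_hits r p \<longleftrightarrow> (\<forall>i. i + h < length p \<longrightarrow> (\<exists>j. i < j \<and> j \<le> i + h \<and> p ! j \<in> sample r))"

lemma segment_between:
  assumes "walk_between n w x v p" "distinct p" "i \<le> j" "j < length p"
  shows "walk_between n w (p ! i) (p ! j) (take (Suc (j - i)) (drop i p))"
    "distinct (take (Suc (j - i)) (drop i p))"
    "walk_total w (drop i p) = walk_total w (take (Suc (j - i)) (drop i p)) + walk_total w (drop j p)"
proof -
  have i: "walk_between n w (p ! i) v (drop i p)" using walk_between_drop assms by simp
  show "walk_between n w (p ! i) (p ! j) (take (Suc (j - i)) (drop i p))"
    using walk_between_take[OF i, of "j - i"] assms by simp
  show "distinct (take (Suc (j - i)) (drop i p))" using assms(2) by simp
  show "walk_total w (drop i p) = walk_total w (take (Suc (j - i)) (drop i p)) + walk_total w (drop j p)"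
    using walk_split[of n w "drop i p" "j - i" "\<lambda>a. a"] i assms unfolding walk_between_def by simp
qed

text \<open>Cut p at sampled nodes at most h hops apart and estimate each piece by
  scale_estimate_le_segment.\<close>
lemma chain_cost_le_path:
  assumes p: "walk_between n w s v p" "distinct p" and hits: "sample_hits r p"
    and weights: "\<forall>u<n. \<forall>v<n. \<forall>x. w u v = Some x \<longrightarrow> x \<le> W"
    and i: "i < length p" "p ! i \<in> sample r"
  shows "\<exists>q. q \<noteq> [] \<and> hd q = p ! i \<and> last q = v \<and>
     chain_cost (scale_estimate P (ideal_history r)) q
       \<le> ereal ((1 + e' / 2) * real (walk_total w (drop i p)) + real (length p - 1 - i) / (2 * real n))"
  using i
proof (induction "length p - i" arbitrary: i rule: less_induct)
  case less
  let ?E = "scale_estimate P (ideal_history r)"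
  have v: "p ! (length p - 1) = v" using p unfolding walk_between_def by (metis last_conv_nth walk.simps(1))
  show ?case
  proof (cases "length p - 1 - i \<le> h")
    case True
    note seg = segment_between[OF p, of i "length p - 1"]
    have "take (Suc (length p - 1 - i)) (drop i p) = drop i p" using less.prems by simp
    then have "?E (p ! i) v \<le> ereal ((1 + e' / 2) * real (walk_total w (drop i p)) + real (length p - 1 - i) / (2 * real n))"
      using scale_estimate_le_segment[OF seg(1,2) less.prems(2) _ weights] True less.prems v by simp
    then show ?thesis by (intro exI[of _ "[p ! i, v]"]) simp
  next
    case False
    then have "i + h < length p" by simp
    then obtain j where j: "i < j" "j \<le> i + h" "p ! j \<in> sample r" using hits unfolding sample_hits_def by blast
    have "j < length p" using j False by simp
    have "length p - j < length p - i" using j \<open>j < length p\<close> by simp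
    obtain q' where q': "q' \<noteq> []" "hd q' = p ! j" "last q' = v"
      "chain_cost ?E q' \<le> ereal ((1 + e' / 2) * real (walk_total w (drop j p)) + real (length p - 1 - j) / (2 * real n))"
      using less.hyps[OF \<open>length p - j < length p - i\<close> \<open>j < length p\<close> j(3)] by blast
    note seg = segment_between[OF p less_imp_le[OF j(1)] \<open>j < length p\<close>]
    have "?E (p ! i) (p ! j) \<le> ereal ((1 + e' / 2) * real (walk_total w (take (Suc (j - i)) (drop i p))) + real (j - i) / (2 * real n))"
      using scale_estimate_le_segment[OF seg(1,2) less.prems(2) _ weights] j \<open>j < length p\<close> by simp
    moreover have "chain_cost ?E (p ! i # q') = ?E (p ! i) (p ! j) + chain_cost ?E q'"
      using q'(1,2) by (cases q') auto
    ultimately have "chain_cost ?E (p ! i # q') \<le>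
        ereal ((1 + e' / 2) * real (walk_total w (take (Suc (j - i)) (drop i p))) + real (j - i) / (2 * real n))
      + ereal ((1 + e' / 2) * real (walk_total w (drop j p)) + real (length p - 1 - j) / (2 * real n))"
      using q'(4) add_mono by fastforce
    also have "\<dots> = ereal ((1 + e' / 2) * real (walk_total w (drop i p)) + real (length p - 1 - i) / (2 * real n))"
    proof -
      have "real (j - i) + real (length p - 1 - j) = real (length p - 1 - i)"
        using j \<open>j < length p\<close> by simp
      then show ?thesis using seg(3) by (simp add: algebra_simps add_divide_distrib[symmetric])
    qed
    finally have "chain_cost ?E (p ! i # q') \<le> ereal ((1 + e' / 2) * real (walk_total w (drop i p)) + real (length p - 1 - i) / (2 * real n))" .
    then show ?thesis using q' by (intro exI[of _ "p ! i # q'"]) simp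
  qed
qed

definition shortest_path :: "nat \<Rightarrow> nat list" where
  "shortest_path v = (SOME p. walk_between n w s v p \<and> distinct p \<and> graph_dist n w s v = ereal (real (walk_total w p)))"

lemma shortest_path:
  assumes "graph_dist n w s v \<noteq> \<infinity>"
  shows "walk_between n w s v (shortest_path v)" "distinct (shortest_path v)"
    "graph_dist n w s v = ereal (real (walk_total w (shortest_path v)))"
  using someI_ex[OF graph_dist_attained_distinct[OF assms]] unfolding shortest_path_def by blast+

lemma estimate_eq: "estimate (sssp_alg c) P inp r v = floor_ereal (chain_dist (scale_estimate P (ideal_history r)) s v)"
  unfolding estimate_def final_hist_ideal using announced_source_ideal[of "ideal_history r" r]
  by (simp add: sssp_alg_def sssp_out_def)

lemma estimate_approx:
  assumes v: "v < n" and weights: "\<forall>u<n. \<forall>v<n. \<forall>x. w u v = Some x \<longrightarrow> x \<le> W"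
    and hits: "graph_dist n w s v \<noteq> \<infinity> \<Longrightarrow> sample_hits r (shortest_path v)"
  shows "graph_dist n w s v \<le> estimate (sssp_alg c) P inp r v \<and>
         estimate (sssp_alg c) P inp r v \<le> ereal (1 + e) * graph_dist n w s v"
proof (cases "graph_dist n w s v = \<infinity>")
  case True
  then have "chain_dist (scale_estimate P (ideal_history r)) s v = \<infinity>"
    using graph_dist_le_chain_dist[OF v, of r] by simp
  then show ?thesis using True e_pos unfolding estimate_eq floor_ereal_def by simp
next
  case False
  define p where "p = shortest_path v"
  note p = shortest_path[OF False, folded p_def]
  have "p \<noteq> []" using p(1) unfolding walk_between_def by (cases p) auto
  moreover have "p ! 0 = s" using p(1) \<open>p \<noteq> []\<close> unfolding walk_between_def by (simp add: hd_conv_nth)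
  moreover have "s \<in> sample r" unfolding sample_def by simp
  ultimately obtain q where q: "q \<noteq> []" "hd q = s" "last q = v"
    "chain_cost (scale_estimate P (ideal_history r)) q
       \<le> ereal ((1 + e' / 2) * real (walk_total w p) + real (length p - 1) / (2 * real n))"
    using chain_cost_le_path[OF p(1,2) _ weights, of r 0] hits[OF False] unfolding p_def by auto
  have "chain_dist (scale_estimate P (ideal_history r)) s v \<le> chain_cost (scale_estimate P (ideal_history r)) q"
    unfolding chain_dist_def using q by (intro INF_lower) auto
  also have "\<dots> \<le> ereal ((1 + e / 2) * real (walk_total w p) + real (length p - 1) / (2 * real n))"
    using q(4) e'_bounds by (auto intro: order_trans simp: mult_right_mono)
  finally have upper: "chain_dist (scale_estimate P (ideal_history r)) s v
      \<le> ereal ((1 + e / 2) * real (walk_total w p) + real (length p - 1) / (2 * real n))" .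
  have "real (length p - 1) < real n"
    using distinct_walk_length_le[of n w p] p \<open>p \<noteq> []\<close> unfolding walk_between_def by (cases p) auto
  then have "real (length p - 1) / (2 * real n) < 1 / 2" using n_ge_1 by (simp add: field_simps)
  then show ?thesis
    using floor_ereal_approx[OF _ upper] graph_dist_le_chain_dist[OF v, of r] e_pos p(3)
    unfolding estimate_eq by simp
qed

end

section \<open>Message size\<close>

lemma sum_phases:
  fixes g :: "nat \<Rightarrow> 'a::comm_monoid_add"
  shows "(\<Sum>t < 2 + (K + 1) * (D + 1). g t) = g 0 + g 1 + (\<Sum>j\<le>K. \<Sum>t\<le>D. g (phase_round D j t))"
proof -
  have "(\<Sum>t < 2 + (K + 1) * (D + 1). g t) = g 0 + g 1 + (\<Sum>t < (K + 1) * (D + 1). g (2 + t))"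
    by (simp add: sum.lessThan_Suc_shift add.assoc del: sum.lessThan_Suc)
  also have "(\<Sum>t < (K + 1) * (D + 1). g (2 + t))
      = (\<Sum>j < K + 1. \<Sum>t \<in> {j * (D + 1) ..< j * (D + 1) + (D + 1)}. g (2 + t))"
    by (rule sum.nat_group[symmetric])
  also have "\<dots> = (\<Sum>j\<le>K. \<Sum>t\<le>D. g (phase_round D j t))"
    by (simp add: phase_round_def sum.atLeastLessThan_shift_0 atLeast0LessThan lessThan_Suc_atMost add.assoc)
  finally show ?thesis .
qed

text \<open>Each source has at most one least cost, so it is announced at most once per scale.\<close>
lemma sum_card_least_cost_le:
  assumes "finite X"
  shows "(\<Sum>t\<le>D. card {x \<in> X. least_cost n w f x u t}) \<le> card X"
proof -
  have "(\<Sum>t\<le>D. card {x \<in> X. least_cost n w f x u t}) = (\<Sum>t\<le>D. \<Sum>x\<in>X. of_bool (least_cost n w f x u t))"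
    using assms by (simp add: sum.If_cases Int_def)
  also have "\<dots> = (\<Sum>x\<in>X. \<Sum>t\<le>D. of_bool (least_cost n w f x u t))"
    by (rule sum.swap)
  also have "\<dots> \<le> (\<Sum>x\<in>X. 1)"
  proof (rule sum_mono)
    fix x
    have "finite {t \<in> {..D}. least_cost n w f x u t}" by simp
    then have "card {t \<in> {..D}. least_cost n w f x u t} \<le> Suc 0"
      by (auto simp: card_le_Suc0_iff_eq dest: least_cost_unique)
    then show "(\<Sum>t\<le>D. of_bool (least_cost n w f x u t) :: nat) \<le> 1"
      by (simp add: sum.If_cases Int_def)
  qed
  finally show ?thesis by simp
qed

context sssp_instance
begin

abbreviation "coin_len \<equiv> num_samples c n h * width"

lemma card_sample_le:
  assumes "r \<in> coin_space n coin_len"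
  shows "card (sample r) \<le> num_samples c n h + 1"
proof -
  have "length (r 0) = coin_len" using assms n_ge_1 unfolding coin_space_def by auto
  then have "card {x \<in> set (decode_ids width (r 0)). x < n} \<le> num_samples c n h"
    using card_length[of "decode_ids width (r 0)"] card_mono[of "set (decode_ids width (r 0))"
      "{x \<in> set (decode_ids width (r 0)). x < n}"]
    by (simp add: length_decode_ids width_pos)
  then show ?thesis unfolding sample_def using card_insert_le_m1 by (simp add: card_insert_if)
qed

lemma total_msg_size_le:
  assumes r: "r \<in> coin_space n coin_len"
  shows "total_msg_size (sssp_alg c) P inp r \<le> 1 + coin_len + (max_scale + 1) * (n * (width * (num_samples c n h + 1)))"
proof -
  define g where "g t = (\<Sum>u<n. length (ideal_history r t u))" for t
  have "g 0 = (\<Sum>u<n. if u = s then 1 else 0)"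
    unfolding g_def ideal_history_def ideal_message_def rounds_def by (intro sum.cong) auto
  then have "g 0 = 1" using s_less_n by simp
  moreover have "g 1 = (\<Sum>u<n. if u = 0 then coin_len else 0)"
    unfolding g_def ideal_history_def ideal_message_def rounds_def using r
    by (intro sum.cong) (auto simp: coin_space_def)
  then have "g 1 = coin_len" using n_ge_1 by simp
  moreover have "(\<Sum>t\<le>budget. g (phase_round budget j t)) \<le> n * (width * (num_samples c n h + 1))"
    if "j \<le> max_scale" for j
  proof -
    have "(\<Sum>t\<le>budget. g (phase_round budget j t))
        = (\<Sum>u<n. width * (\<Sum>t\<le>budget. card {x \<in> sample r. least_cost n w (rounded (unit j)) x u t}))"
      unfolding g_def
      by (subst sum.swap) (simp add: ideal_history_phase[OF that] length_encode_ids finite_sample sum_distrib_left)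
    also have "\<dots> \<le> (\<Sum>u<n. width * (num_samples c n h + 1))"
      using sum_card_least_cost_le[OF finite_sample] card_sample_le[OF r]
      by (intro sum_mono mult_left_mono) (meson le_trans, simp)
    finally show ?thesis by simp
  qed
  then have "(\<Sum>j\<le>max_scale. \<Sum>t\<le>budget. g (phase_round budget j t))
      \<le> (\<Sum>j\<le>max_scale. n * (width * (num_samples c n h + 1)))"
    by (intro sum_mono) simp
  ultimately show ?thesis
    unfolding total_msg_size_def final_hist_ideal
    using sum_phases[of g max_scale budget] by (simp add: sssp_alg_def rounds_def g_def)
qed

end

section \<open>Probability of hitting every window\<close>

lemma finite_coin_space: "finite (coin_space n L)"
proof -
  let ?F = "\<lambda>f v. if v < n then f v else ([] :: bool list)"
  have "coin_space n L \<subseteq> ?F ` (PiE {..<n} (\<lambda>_. {l. length l = L}))"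
  proof
    fix r assume r: "r \<in> coin_space n L"
    then have "r = ?F (restrict r {..<n})" unfolding coin_space_def by (auto simp: fun_eq_iff)
    moreover have "restrict r {..<n} \<in> PiE {..<n} (\<lambda>_. {l. length l = L})"
      using r unfolding coin_space_def by auto
    ultimately show "r \<in> ?F ` (PiE {..<n} (\<lambda>_. {l. length l = L}))" by blast
  qed
  moreover have "finite (PiE {..<n} (\<lambda>_. {l :: bool list. length l = L}))"
    by (intro finite_PiE) (simp_all add: finite_list_length)
  ultimately show ?thesis using finite_subset by blast
qed

lemma set_pmf_coins: "set_pmf (coins n L) = coin_space n L"
proof -
  have "(\<lambda>v. if v < n then replicate L False else []) \<in> coin_space n L"
    unfolding coin_space_def by auto
  then show ?thesis unfolding coins_def using finite_coin_space by (intro set_pmf_of_set) auto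
qed

lemma prob_coins_first:
  assumes "n \<ge> 1"
  shows "measure_pmf.prob (coins n L) {r. Q (r 0)} = real (card {l. length l = L \<and> Q l}) / 2 ^ L"
proof -
  let ?S0 = "coin_space n L \<inter> {r. r 0 = replicate L False}"
  have card_first: "card (coin_space n L \<inter> {r. R (r 0)}) = card {l. length l = L \<and> R l} * card ?S0" for R
  proof -
    have "bij_betw (\<lambda>r. (r 0, r(0 := replicate L False))) (coin_space n L \<inter> {r. R (r 0)})
        ({l. length l = L \<and> R l} \<times> ?S0)"
      by (rule bij_betw_byWitness[where f'="\<lambda>(l, r'). r'(0 := l)"])
        (use assms in \<open>auto simp: coin_space_def\<close>)
    then show ?thesis by (simp add: bij_betw_same_card card_cartesian_product)
  qed
  have "(\<lambda>v. if v < n then replicate L False else []) \<in> ?S0"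
    using assms unfolding coin_space_def by auto
  then have "card ?S0 > 0" and nonempty: "coin_space n L \<noteq> {}"
    using finite_coin_space[of n L] card_gt_0_iff by blast+
  moreover have "card (coin_space n L) = 2 ^ L * card ?S0"
    using card_first[of "\<lambda>_. True"] card_lists_length_eq[of "UNIV :: bool set" L] by simp
  ultimately show ?thesis
    unfolding coins_def measure_pmf_of_set[OF nonempty finite_coin_space] card_first
    by (simp add: field_simps Int_def)
qed

lemma card_append_prod:
  "card {l. length l = p + q \<and> A (take p l) \<and> B (drop p l)} =
   card {a. length a = p \<and> A a} * card {c. length c = q \<and> B c}"
proof -
  have "bij_betw (\<lambda>(a, c). a @ c) ({a. length a = p \<and> A a} \<times> {c. length c = q \<and> B c})
      {l. length l = p + q \<and> A (take p l) \<and> B (drop p l)}"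
    by (rule bij_betw_byWitness[where f'="\<lambda>l. (take p l, drop p l)"]) auto
  then show ?thesis by (simp add: bij_betw_same_card[symmetric] card_cartesian_product)
qed

lemma card_bits_nat_notin:
  assumes "T \<subseteq> {..<2 ^ b}"
  shows "card {a. length a = b \<and> bits_nat a \<notin> T} = 2 ^ b - card T"
proof -
  have "bij_betw bits_nat {a. length a = b \<and> bits_nat a \<in> T} T"
    by (rule bij_betw_byWitness[where f'="nat_bits b"])
      (use assms nat_bits_bits_nat in \<open>auto simp: bits_nat_nat_bits\<close>)
  then have "card {a. length a = b \<and> bits_nat a \<in> T} = card T" by (rule bij_betw_same_card)
  moreover have "{a. length a = b \<and> bits_nat a \<notin> T} = {a. length a = b} - {a. length a = b \<and> bits_nat a \<in> T}"
    by auto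
  moreover have "finite {a :: bool list. length a = b \<and> bits_nat a \<in> T}"
    by (rule finite_subset[OF _ finite_list_length[of b]]) auto
  ultimately show ?thesis
    using card_Diff_subset[of "{a. length a = b \<and> bits_nat a \<in> T}" "{a :: bool list. length a = b}"]
      card_lists_length_eq[of "UNIV :: bool set" b] by auto
qed

lemma card_ids_avoiding:
  assumes T: "T \<subseteq> {..<2 ^ b}" and b: "b > 0"
  shows "card {l. length l = m * b \<and> (\<forall>x\<in>set (decode_ids b l). x \<notin> T)} = (2 ^ b - card T) ^ m"
proof (induction m)
  case 0
  have "{l :: bool list. length l = 0 * b \<and> (\<forall>x\<in>set (decode_ids b l). x \<notin> T)} = {[]}" by auto
  then show ?case by simp
next
  case (Suc m)
  have "decode_ids b l = bits_nat (take b l) # decode_ids b (drop b l)" if "length l = b + m * b" for l :: "bool list"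
    using decode_ids_append[of "take b l" b "drop b l"] that b by simp
  then have "{l. length l = Suc m * b \<and> (\<forall>x\<in>set (decode_ids b l). x \<notin> T)} =
      {l. length l = b + m * b \<and> bits_nat (take b l) \<notin> T \<and> (\<forall>x\<in>set (decode_ids b (drop b l)). x \<notin> T)}"
    by auto
  also have "card \<dots> = card {a. length a = b \<and> bits_nat a \<notin> T} *
      card {c. length c = m * b \<and> (\<forall>x\<in>set (decode_ids b c). x \<notin> T)}"
    by (rule card_append_prod)
  also have "\<dots> = (2 ^ b - card T) ^ Suc m" using Suc card_bits_nat_notin[OF T] by simp
  finally show ?case .
qed

context sssp_instance
begin

lemma avoid_fraction_le:
  assumes "c > 0" "h \<le> n"
  shows "real ((2 ^ width - h) ^ num_samples c n h) / 2 ^ coin_len \<le> real n powr (- (c + 2))"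
proof -
  define m where "m = num_samples c n h"
  define q where "q = real h / 2 ^ width"
  have h_le: "h \<le> 2 ^ width" using assms(2) less_two_pow_bit_length[of n] by simp
  have "(2::real) ^ width \<le> 2 * real n"
    using two_pow_bit_length_le[OF n_ge_1] by (metis of_nat_le_iff of_nat_mult of_nat_numeral of_nat_power)
  then have q_ge: "q \<ge> real h / (2 * real n)" unfolding q_def using h_ge_1 n_ge_1 by (intro divide_left_mono) auto
  have q_le: "q \<le> 1" unfolding q_def using h_le by (simp add: divide_le_eq)
  have "real ((2 ^ width - h) ^ m) / 2 ^ coin_len = (1 - q) ^ m"
  proof -
    have "real ((2 ^ width - h) ^ m) = (2 ^ width - real h) ^ m" using h_le by (simp add: of_nat_diff)
    moreover have "(2::real) ^ coin_len = (2 ^ width) ^ m" unfolding m_def by (simp add: power_mult[symmetric] mult.commute)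
    moreover have "(2 ^ width - real h) / 2 ^ width = 1 - q" unfolding q_def by (simp add: field_simps)
    ultimately show ?thesis by (simp add: power_divide[symmetric])
  qed
  also have "(1 - q) ^ m \<le> exp (- (real h / (2 * real n))) ^ m"
  proof (rule power_mono)
    have "1 - q \<le> 1 - real h / (2 * real n)" using q_ge by simp
    also have "\<dots> \<le> exp (- (real h / (2 * real n)))" using exp_ge_add_one_self[of "- (real h / (2 * real n))"] by simp
    finally show "1 - q \<le> exp (- (real h / (2 * real n)))" .
  qed (use q_le in simp)
  also have "\<dots> = exp (- (real m * (real h / (2 * real n))))" by (simp add: exp_of_nat_mult[symmetric])
  also have "\<dots> \<le> exp (- ((c + 2) * ln (real n)))"
  proof -
    have "real m \<ge> 2 * (c + 2) * real n * ln (real n) / real h"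
      unfolding m_def num_samples_def by linarith
    then have "real m * (real h / (2 * real n)) \<ge> 2 * (c + 2) * real n * ln (real n) / real h * (real h / (2 * real n))"
      using h_ge_1 n_ge_1 by (intro mult_right_mono) auto
    also have "2 * (c + 2) * real n * ln (real n) / real h * (real h / (2 * real n)) = (c + 2) * ln (real n)"
      using h_ge_1 n_ge_1 by (simp add: field_simps)
    finally show ?thesis by simp
  qed
  also have "\<dots> = real n powr (- (c + 2))" using n_ge_1 by (simp add: powr_def algebra_simps)
  finally show ?thesis unfolding m_def .
qed

lemma prob_avoid_le:
  assumes "c > 0" "h \<le> n" "T \<subseteq> {..<n}" "card T = h"
  shows "measure_pmf.prob (coins n coin_len) {r. \<forall>x\<in>set (decode_ids width (r 0)). x \<notin> T} \<le> real n powr (- (c + 2))"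
proof -
  have "T \<subseteq> {..<2 ^ width}" using assms(3) less_two_pow_bit_length[of n] by auto
  have "measure_pmf.prob (coins n coin_len) {r. \<forall>x\<in>set (decode_ids width (r 0)). x \<notin> T}
      = real (card {l. length l = coin_len \<and> (\<forall>x\<in>set (decode_ids width l). x \<notin> T)}) / 2 ^ coin_len"
    by (rule prob_coins_first[OF n_ge_1])
  also have "\<dots> = real ((2 ^ width - h) ^ num_samples c n h) / 2 ^ coin_len"
    by (simp only: card_ids_avoiding[OF \<open>T \<subseteq> {..<2 ^ width}\<close> width_pos] assms(4))
  also have "\<dots> \<le> real n powr (- (c + 2))" by (rule avoid_fraction_le[OF assms(1,2)])
  finally show ?thesis .
qed

definition misses :: "nat \<Rightarrow> nat \<Rightarrow> (nat \<Rightarrow> bool list) set" where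
  "misses v i = (if graph_dist n w s v \<noteq> \<infinity> \<and> i + h < length (shortest_path v)
     then {r. \<forall>x\<in>set (decode_ids width (r 0)). x \<notin> set (take h (drop (Suc i) (shortest_path v)))} else {})"

lemma prob_misses_le:
  assumes "c > 0" "h \<le> n"
  shows "measure_pmf.prob (coins n coin_len) (misses v i) \<le> real n powr (- (c + 2))"
proof (cases "graph_dist n w s v \<noteq> \<infinity> \<and> i + h < length (shortest_path v)")
  case True
  define p where "p = shortest_path v"
  define T where "T = set (take h (drop (Suc i) p))"
  have "set p \<subseteq> {..<n}"
    using True shortest_path(1) walk_set unfolding p_def walk_between_def by blast
  then have "T \<subseteq> {..<n}" unfolding T_def by (auto dest: in_set_takeD in_set_dropD)
  moreover have "card T = h"
    unfolding T_def using True shortest_path(2) unfolding p_def by (auto simp: distinct_card min_def)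
  moreover have "misses v i = {r. \<forall>x\<in>set (decode_ids width (r 0)). x \<notin> T}"
    using True unfolding misses_def T_def p_def by simp
  ultimately show ?thesis using prob_avoid_le[OF assms] by simp
next
  case False
  then have "misses v i = {}" unfolding misses_def by auto
  then show ?thesis by simp
qed

lemma sample_hits_if_not_misses:
  assumes v: "v < n" "graph_dist n w s v \<noteq> \<infinity>" and r: "\<forall>i<n. r \<notin> misses v i"
  shows "sample_hits r (shortest_path v)"
  unfolding sample_hits_def
proof (intro allI impI)
  fix i assume i: "i + h < length (shortest_path v)"
  define p where "p = shortest_path v"
  have walk: "walk n w p" "distinct p" using shortest_path[OF v(2)] unfolding p_def walk_between_def by auto
  then have "i < n" using i distinct_walk_length_le[OF walk] unfolding p_def by simp
  then have "r \<notin> misses v i" using r by simp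
  moreover have "misses v i = {r. \<forall>x\<in>set (decode_ids width (r 0)). x \<notin> set (take h (drop (Suc i) p))}"
    using v(2) i unfolding misses_def p_def by simp
  ultimately obtain x where x: "x \<in> set (decode_ids width (r 0))" "x \<in> set (take h (drop (Suc i) p))"
    by blast
  then obtain k where k: "k < length (take h (drop (Suc i) p))" "take h (drop (Suc i) p) ! k = x"
    by (auto simp: in_set_conv_nth)
  then have "k < h" "x = p ! (Suc i + k)" using i unfolding p_def by auto
  moreover have "x < n" using x(2) walk_set[OF walk(1)] by (auto dest: in_set_takeD in_set_dropD)
  then have "x \<in> sample r" unfolding sample_def using x(1) by simp
  ultimately show "\<exists>j. i < j \<and> j \<le> i + h \<and> shortest_path v ! j \<in> sample r"
    unfolding p_def by (intro exI[of _ "Suc i + k"]) auto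
qed

lemma prob_some_misses_le:
  assumes "c > 0" "h \<le> n"
  shows "measure_pmf.prob (coins n coin_len) (\<Union>v<n. \<Union>i<n. misses v i) \<le> real n powr (- c)"
proof -
  have "measure_pmf.prob (coins n coin_len) (\<Union>v<n. \<Union>i<n. misses v i)
      \<le> (\<Sum>v<n. measure_pmf.prob (coins n coin_len) (\<Union>i<n. misses v i))"
    by (rule measure_pmf.finite_measure_subadditive_finite) auto
  also have "\<dots> \<le> (\<Sum>v<n. \<Sum>i<n. measure_pmf.prob (coins n coin_len) (misses v i))"
    by (intro sum_mono measure_pmf.finite_measure_subadditive_finite) auto
  also have "\<dots> \<le> (\<Sum>v<n. \<Sum>i<n. real n powr (- (c + 2)))"
    by (intro sum_mono prob_misses_le[OF assms])
  also have "\<dots> = real n powr 1 * real n powr 1 * real n powr (- (c + 2))"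
    using n_ge_1 by simp
  also have "\<dots> = real n powr (- c)" by (simp only: powr_add[symmetric]) simp
  finally show ?thesis .
qed

end

lemma ln_plus_2_ge_1: "n \<ge> 1 \<Longrightarrow> ln (real n + 2) \<ge> 1"
proof -
  assume "n \<ge> 1"
  then have "ln (272/100) \<le> ln (real n + 2)" by (subst ln_le_cancel_iff) auto
  then show ?thesis using ln_272_gt_1 by linarith
qed

lemma ln_plus_2_ge_two_thirds: "ln (real W + 2) \<ge> 2/3"
proof -
  have "ln 2 \<le> ln (real W + 2)" by (subst ln_le_cancel_iff) auto
  then show ?thesis using ln2_ge_two_thirds by linarith
qed

lemma ln_le_plus_2: "n \<ge> 1 \<Longrightarrow> ln (real n) \<le> ln (real n + 2)"
  by (subst ln_le_cancel_iff) auto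

lemma le_ln_if_two_pow_le: "(2::nat) ^ k \<le> x \<Longrightarrow> real k \<le> 3 / 2 * ln (real x)"
proof -
  assume le: "(2::nat) ^ k \<le> x"
  then have "(2::real) ^ k \<le> real x" by (metis of_nat_le_iff of_nat_numeral of_nat_power)
  moreover have "(0::real) < 2 ^ k" by simp
  ultimately have "real k * ln 2 \<le> ln (real x)"
    by (metis ln_le_cancel_iff ln_realpow order_less_le_trans zero_less_numeral)
  moreover have "real k * (2/3) \<le> real k * ln 2" using ln2_ge_two_thirds by (intro mult_left_mono) auto
  ultimately show ?thesis by linarith
qed

lemma bit_length_le_ln: "m \<ge> 1 \<Longrightarrow> real (bit_length m) \<le> 3 / 2 * ln (real m) + 1"
proof -
  assume m: "m \<ge> 1"
  then have "2 * 2 ^ (bit_length m - 1) \<le> 2 * m"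
    using two_pow_bit_length_le bit_length_pos by (metis Suc_diff_1 power_Suc)
  then have "real (bit_length m - 1) \<le> 3 / 2 * ln (real m)" by (intro le_ln_if_two_pow_le) simp
  then show ?thesis using bit_length_pos[OF m] by linarith
qed

lemma bit_length_0: "bit_length 0 = 0"
  unfolding bit_length_def by (rule Least_equality) auto

lemma width_le_ln: "n \<ge> 1 \<Longrightarrow> real (bit_length n) \<le> 3 * ln (real n + 2)"
  using bit_length_le_ln[of n] ln_le_plus_2[of n] ln_plus_2_ge_1[of n] by linarith

lemma max_scale_le_ln:
  assumes "n \<ge> 1"
  shows "real (bit_length (n * W)) + 1 \<le> 10 * ln (real n + 2) * ln (real W + 2)"
proof -
  define Ln where "Ln = ln (real n + 2)"
  define Lw where "Lw = ln (real W + 2)"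
  have L: "Ln \<ge> 1" "Lw \<ge> 2/3" unfolding Ln_def Lw_def using ln_plus_2_ge_1[OF assms] ln_plus_2_ge_two_thirds by auto
  then have prods: "Ln * Lw \<ge> 2/3" "Ln * (2/3) \<le> Ln * Lw" "Lw \<le> Ln * Lw"
    using mult_mono[of 1 Ln "2/3" Lw] mult_left_mono[of "2/3" Lw Ln] mult_right_mono[of 1 Ln Lw] by auto
  show ?thesis
  proof (cases "W = 0")
    case True
    then show ?thesis using prods unfolding Ln_def Lw_def by (simp add: bit_length_0)
  next
    case False
    then have "W \<ge> 1" by simp
    have "ln (real n * real W) = ln (real n) + ln (real W)"
      using assms \<open>W \<ge> 1\<close> by (simp add: ln_mult)
    then have "ln (real n * real W) \<le> Ln + Lw"
      using ln_le_plus_2[OF assms] ln_le_plus_2[OF \<open>W \<ge> 1\<close>] unfolding Ln_def Lw_def by linarith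
    moreover have "real (bit_length (n * W)) \<le> 3 / 2 * ln (real n * real W) + 1"
      using bit_length_le_ln[of "n * W"] assms False by simp
    ultimately have "real (bit_length (n * W)) + 1 \<le> 2 + 3/2 * Ln + 3/2 * Lw" by linarith
    also have "\<dots> \<le> 10 * Ln * Lw" using prods by linarith
    finally show ?thesis unfolding Ln_def Lw_def .
  qed
qed

lemma hop_budget_le:
  assumes "h \<ge> 1" "e > 0"
  shows "real (hop_budget h e) + 1 \<le> 7 * real h / min e 1"
proof -
  define e' where "e' = min e 1"
  have e': "0 < e'" "e' \<le> 1" unfolding e'_def using assms by auto
  then have "4 * real h / e' \<ge> 0" by simp
  then have "real (nat \<lceil>4 * real h / e'\<rceil>) \<le> 4 * real h / e' + 1" by linarith
  moreover have "real h \<le> real h / e'" "1 \<le> real h / e'" using e' assms by (simp_all add: le_divide_eq)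
  moreover have "7 * real h / e' = 4 * real h / e' + real h / e' + 2 * (real h / e')" by (simp add: field_simps)
  ultimately show ?thesis unfolding hop_budget_def e'_def[symmetric] by linarith
qed

lemma num_samples_le:
  assumes c: "c > 0" and h: "1 \<le> h" "h \<le> n"
  shows "real (num_samples c n h) + 1 \<le> (2 * c + 6) * real n * ln (real n + 2) / real h"
proof -
  define Ln where "Ln = ln (real n + 2)"
  have L: "Ln \<ge> 1" "ln (real n) \<le> Ln" "0 \<le> ln (real n)"
    unfolding Ln_def using ln_plus_2_ge_1[of n] ln_le_plus_2[of n] h by auto
  have hpos: "real h > 0" using h by simp
  have "real (num_samples c n h) \<le> 2 * (c + 2) * real n * ln (real n) / real h + 1"
  proof -
    have "2 * (c + 2) * real n * ln (real n) / real h \<ge> 0" using c L hpos by simp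
    then show ?thesis unfolding num_samples_def by linarith
  qed
  also have "2 * (c + 2) * real n * ln (real n) / real h \<le> 2 * (c + 2) * real n * Ln / real h"
    using L c hpos by (intro divide_right_mono mult_left_mono) auto
  finally have "real (num_samples c n h) + 1 \<le> 2 * (c + 2) * real n * Ln / real h + 2" by simp
  moreover have "1 \<le> (real n / real h) * Ln"
    using mult_mono[of 1 "real n / real h" 1 Ln] h hpos L by (simp add: le_divide_eq)
  moreover have "2 * (c + 2) * real n * Ln / real h + 2 * ((real n / real h) * Ln) = (2 * c + 6) * real n * Ln / real h"
    using hpos by (simp add: field_simps)
  ultimately show ?thesis unfolding Ln_def[symmetric] by linarith
qed

context sssp_instance
begin

abbreviation "LN \<equiv> ln (real n + 2)"
abbreviation "LW \<equiv> ln (real W + 2)"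

lemma logs_ge: "LN \<ge> 1" "LW \<ge> 2/3" "LN * LW \<ge> 2/3"
  using ln_plus_2_ge_1[OF n_ge_1] ln_plus_2_ge_two_thirds mult_mono[of 1 LN "2/3" LW] by auto

lemma rounds_bound:
  assumes "c > 0"
  shows "real (rounds P) \<le> 200 * (c + 3) * LN ^ 3 * (real h * LW / e')"
proof -
  define X where "X = LN * LW * (real h / e')"
  have "real h / e' \<ge> 1" using e'_bounds h_ge_1 by (simp add: le_divide_eq)
  then have X: "X \<ge> 2/3" unfolding X_def using logs_ge mult_mono[of "2/3" "LN * LW" 1 "real h / e'"] by simp
  have "real (rounds P) = 2 + (real max_scale + 1) * (real budget + 1)"
    unfolding rounds_def by (simp add: algebra_simps)
  also have "(real max_scale + 1) * (real budget + 1) \<le> (10 * LN * LW) * (7 * real h / e')"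
    using max_scale_le_ln[OF n_ge_1] hop_budget_le[OF h_ge_1 e_pos] by (intro mult_mono) auto
  also have "(10 * LN * LW) * (7 * real h / e') = 70 * X" unfolding X_def by simp
  finally have "real (rounds P) \<le> 73 * X" using X by linarith
  also have "\<dots> \<le> 200 * (c + 3) * (LN ^ 2 * X)"
    using X assms logs_ge mult_mono[of 73 "200 * (c + 3)" X "LN ^ 2 * X"]
    by (simp add: mult_le_cancel_right1 one_le_power)
  also have "\<dots> = 200 * (c + 3) * LN ^ 3 * (real h * LW / e')"
    unfolding X_def by (simp add: power3_eq_cube power2_eq_square)
  finally show ?thesis .
qed

lemma msg_size_bound:
  assumes c: "c > 0" and hn: "h \<le> n" and r: "r \<in> coin_space n coin_len"
  shows "real (total_msg_size (sssp_alg c) P inp r) \<le> 200 * (c + 3) * LN ^ 3 * (real n ^ 2 * LW / (e' * real h))"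
proof -
  define K where "K = real max_scale + 1"
  define B where "B = real width"
  define M where "M = real (num_samples c n h) + 1"
  have bounds: "K \<le> 10 * LN * LW" "B \<le> 3 * LN" "M \<le> (2 * c + 6) * real n * LN / real h"
    unfolding K_def B_def M_def
    using max_scale_le_ln[OF n_ge_1] width_le_ln[OF n_ge_1] num_samples_le[OF c h_ge_1 hn] by auto
  have ge_1: "K \<ge> 1" "B \<ge> 1" "M \<ge> 1" "real n \<ge> 1"
    unfolding K_def B_def M_def using width_pos n_ge_1 by auto
  have "real (total_msg_size (sssp_alg c) P inp r)
      \<le> real (1 + coin_len + (max_scale + 1) * (n * (width * (num_samples c n h + 1))))"
    using total_msg_size_le[OF r] by (simp only: of_nat_le_iff)
  also have "\<dots> = 1 + (M - 1) * B + K * (real n * (B * M))"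
    unfolding K_def B_def M_def by (simp add: algebra_simps)
  also have "\<dots> \<le> 3 * (K * real n * B * M)"
  proof -
    have "1 * 1 \<le> K * real n" using ge_1 by (intro mult_mono) auto
    then have "B * M \<le> K * real n * (B * M)" using ge_1 mult_right_mono[of 1 "K * real n" "B * M"] by simp
    moreover have "1 \<le> B * M" using ge_1 mult_mono[of 1 B 1 M] by simp
    moreover have "(M - 1) * B \<le> B * M" using ge_1 by (simp add: algebra_simps)
    moreover have "K * (real n * (B * M)) = K * real n * B * M" "K * real n * (B * M) = K * real n * B * M"
      by (simp_all add: mult.assoc)
    ultimately show ?thesis by linarith
  qed
  also have "K * real n * B * M \<le> (10 * LN * LW) * real n * (3 * LN) * ((2 * c + 6) * real n * LN / real h)"
    using bounds ge_1 by (intro mult_mono) auto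
  also have "3 * \<dots> = 180 * (c + 3) * LN ^ 3 * (real n ^ 2 * LW / real h)"
    using h_ge_1 by (simp add: power3_eq_cube power2_eq_square field_simps)
  also have "\<dots> \<le> 200 * (c + 3) * LN ^ 3 * (real n ^ 2 * LW / (e' * real h))"
  proof (intro mult_mono divide_left_mono)
    show "e' * real h \<le> real h" using e'_bounds h_ge_1 by (simp add: mult_le_cancel_right1)
  qed (use c logs_ge e'_bounds h_ge_1 in auto)
  finally show ?thesis by simp
qed

lemma success_probability:
  assumes c: "c > 0" and hn: "h \<le> n" and weights: "\<forall>u<n. \<forall>v<n. \<forall>x. w u v = Some x \<longrightarrow> x \<le> W"
  shows "measure_pmf.prob (coins n coin_len)
     {r. (\<forall>v<n. graph_dist n w s v \<le> estimate (sssp_alg c) P inp r v \<and>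
                estimate (sssp_alg c) P inp r v \<le> ereal (1 + e) * graph_dist n w s v) \<and>
         real (total_msg_size (sssp_alg c) P inp r) \<le> 200 * (c + 3) * LN ^ 3 * (real n ^ 2 * LW / (e' * real h))}
     \<ge> 1 - real n powr (- c)" (is "_ \<ge> _" is "measure_pmf.prob ?M ?good \<ge> _")
proof -
  let ?U = "\<Union>v<n. \<Union>i<n. misses v i"
  have good: "r \<in> ?good" if r: "r \<in> coin_space n coin_len" "r \<notin> ?U" for r
  proof -
    have "graph_dist n w s v \<le> estimate (sssp_alg c) P inp r v \<and>
        estimate (sssp_alg c) P inp r v \<le> ereal (1 + e) * graph_dist n w s v" if v: "v < n" for v
    proof (rule estimate_approx[OF v weights])
      have "\<forall>i<n. r \<notin> misses v i" using r(2) v by blast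
      then show "graph_dist n w s v \<noteq> \<infinity> \<Longrightarrow> sample_hits r (shortest_path v)"
        using sample_hits_if_not_misses[OF v] by simp
    qed
    then show ?thesis using msg_size_bound[OF c hn r(1)] by simp
  qed
  have "set_pmf ?M \<inter> - ?U \<subseteq> ?good"
  proof
    fix r assume "r \<in> set_pmf ?M \<inter> - ?U"
    then have "r \<in> coin_space n coin_len" "r \<notin> ?U" unfolding set_pmf_coins by simp_all
    then show "r \<in> ?good" by (rule good)
  qed
  then have "measure_pmf.prob ?M (set_pmf ?M \<inter> - ?U) \<le> measure_pmf.prob ?M ?good"
    by (intro measure_pmf.finite_measure_mono) auto
  moreover have "measure_pmf.prob ?M (set_pmf ?M \<inter> - ?U) = 1 - measure_pmf.prob ?M ?U"
    using measure_Int_set_pmf[of ?M "- ?U"] measure_pmf.prob_compl[of ?U ?M] by (simp add: Compl_eq_Diff_UNIV Int_commute)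
  ultimately show ?thesis using prob_some_misses_le[OF c hn] by linarith
qed

end

theorem lemma6p2:
  fixes c :: real
  assumes "c > 0"
  shows "\<exists>(A :: bc_alg) (C :: real) (k :: nat).
    \<forall>(n :: nat) (W :: nat) (\<epsilon> :: real) (h :: nat) (w :: nat \<Rightarrow> nat \<Rightarrow> nat option) (s :: nat).
      s < n \<and> \<epsilon> > 0 \<and> 1 \<le> h \<and> h \<le> n \<and>
      (\<forall>u < n. \<forall>v < n. \<forall>x. w u v = Some x \<longrightarrow> x \<le> W) \<longrightarrow>
      real (num_rounds A (n, W, \<epsilon>, h))
         \<le> C * ln (real n + 2) ^ k * (real h * ln (real W + 2) / min \<epsilon> 1)
      \<and> measure_pmf.prob (coins n (num_coins A (n, W, \<epsilon>, h)))
          {r. (\<forall>v < n. graph_dist n w s v \<le> estimate A (n, W, \<epsilon>, h) (node_input n w s) r v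
                     \<and> estimate A (n, W, \<epsilon>, h) (node_input n w s) r v
                          \<le> ereal (1 + \<epsilon>) * graph_dist n w s v)
              \<and> real (total_msg_size A (n, W, \<epsilon>, h) (node_input n w s) r)
                  \<le> C * ln (real n + 2) ^ k
                      * (real n ^ 2 * ln (real W + 2) / (min \<epsilon> 1 * real h))}
        \<ge> 1 - real n powr (- c)"
proof (intro exI[of _ "sssp_alg c"] exI[of _ "200 * (c + 3)"] exI[of _ "3::nat"] allI impI)
  fix n W :: nat and \<epsilon> :: real and h :: nat and w :: "nat \<Rightarrow> nat \<Rightarrow> nat option" and s :: nat
  assume H: "s < n \<and> \<epsilon> > 0 \<and> 1 \<le> h \<and> h \<le> n \<and> (\<forall>u < n. \<forall>v < n. \<forall>x. w u v = Some x \<longrightarrow> x \<le> W)"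
  then interpret sssp_instance c n W \<epsilon> h w s by unfold_locales auto
  show "real (num_rounds (sssp_alg c) P) \<le> 200 * (c + 3) * LN ^ 3 * (real h * LW / min \<epsilon> 1) \<and>
      measure_pmf.prob (coins n (num_coins (sssp_alg c) P))
        {r. (\<forall>v < n. graph_dist n w s v \<le> estimate (sssp_alg c) P inp r v
                   \<and> estimate (sssp_alg c) P inp r v \<le> ereal (1 + \<epsilon>) * graph_dist n w s v)
            \<and> real (total_msg_size (sssp_alg c) P inp r)
                \<le> 200 * (c + 3) * LN ^ 3 * (real n ^ 2 * LW / (min \<epsilon> 1 * real h))}
      \<ge> 1 - real n powr (- c)"
    using rounds_bound[OF assms] success_probability[OF assms] H by (simp add: sssp_alg_def)
qed

end
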